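(* Let $f\colon\mathbb S^2\to\mathbb C$ be defined by $$f(\xi)=\ln\Big(\ln\frac{8}{\sqrt{1-\xi_3^2}}\Big)\ \text{ if }|\xi_3|\ne1,\qquad f(\xi)=0\ \text{ otherwise}.$$ Then $f\in H^1(\mathbb S^2)$, but its DFS function satisfies $\tilde f\notin H^1(\mathbb T^2)$.
   Context: $\mathbb T^2=\mathbb R^2/(2\pi\mathbb Z^2)$, functions identified with $2\pi$-biperiodic functions on $\mathbb R^2$. For locally integrable $f,g\colon\mathbb R^2\to\mathbb C$ and $\beta\in\mathbb N_0^2$, $g$ is the weak derivative $D^\beta f$ if $\int f\,D^\beta u=(-1)^{|\beta|}\int g\,u$ for all $u\in C_c^\infty(\mathbb R^2)$. $H^1(\mathbb T^2)$ is the set of $f\in L_2(\mathbb T^2)$ whose weak derivatives $D^\beta f$, $|\beta|\le1$, exist and lie in $L_2(\mathbb T^2)$, with norm $\|f\|_{H^1(\mathbb T^2)}^2=\sum_{|\beta|\le1}\|D^\beta f\|^2_{L_2(\mathbb T^2)}$. Sphere: $L_2(\mathbb S^2)$ with respect to surface measure, $\int_{\mathbb S^2}f\,d\xi=\int_{-\pi}^\pi\int_0^\pi f(\phi(\lambda,\theta))\sin\theta\,d\theta\,d\lambda$. For $f\colon\mathbb S^2\to\mathbb C$ its radial extension is $f^\star(x)=f(x/\|x\|)$, $x\in\mathbb R^3\setminus\{0\}$, and if $f^\star$ is differentiable the surface gradient is $\nabla^\star f(x)=\nabla f^\star(x)$, $x\in\mathbb S^2$. $H^0(\mathbb S^2):=L_2(\mathbb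 S^2)$; for $f\in\mathcal C^1(\mathbb S^2)$ (continuously differentiable on the sphere, i.e. having a $C^1$ extension to an open neighbourhood), $\|f\|_{H^1(\mathbb S^2)}^2:=\sum_{i=1}^3\|(\nabla^\star f)_i\|^2_{L_2(\mathbb S^2)}+\tfrac14\|f\|^2_{L_2(\mathbb S^2)}$, and $H^1(\mathbb S^2)$ is the completion (closure) of $\{f\in\mathcal C^1(\mathbb S^2):\|f\|_{H^1(\mathbb S^2)}<\infty\}$ in this norm, realized as a subspace of $L_2(\mathbb S^2)$. DFS function: $\tilde f=f\circ\phi$ with $\phi(\lambda,\theta)=(\cos\lambda\sin\theta,\sin\lambda\sin\theta,\cos\theta)$. *)

theory Defs
  imports "HOL-Analysis.Analysis"
begin

section \<open>Torus T^2 = R^2/(2 pi Z^2): functions are 2pi-biperiodic functions on R x R\<close>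

definition biperiodic :: "(real \<times> real \<Rightarrow> complex) \<Rightarrow> bool" where
  "biperiodic f \<longleftrightarrow> (\<forall>x y. f (x + 2*pi, y) = f (x, y) \<and> f (x, y + 2*pi) = f (x, y))"

definition torus_L2 :: "(real \<times> real \<Rightarrow> complex) \<Rightarrow> bool" where
  "torus_L2 f \<longleftrightarrow> f \<in> borel_measurable lborel \<and>
     set_integrable lborel ({-pi..pi} \<times> {-pi..pi}) (\<lambda>p. (cmod (f p))\<^sup>2)"

definition locally_integrable2 :: "(real \<times> real \<Rightarrow> complex) \<Rightarrow> bool" where
  "locally_integrable2 f \<longleftrightarrow> (\<forall>K. compact K \<longrightarrow> set_integrable lborel K f)"

definition pd1 :: "(real \<times> real \<Rightarrow> complex) \<Rightarrow> real \<times> real \<Rightarrow> complex" where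
  "pd1 u p = vector_derivative (\<lambda>t. u (t, snd p)) (at (fst p))"

definition pd2 :: "(real \<times> real \<Rightarrow> complex) \<Rightarrow> real \<times> real \<Rightarrow> complex" where
  "pd2 u p = vector_derivative (\<lambda>t. u (fst p, t)) (at (snd p))"

text \<open>C^infinity: all iterated partial derivatives exist and are continuous
  (greatest fixed point formulation)\<close>
definition smooth2 :: "(real \<times> real \<Rightarrow> complex) \<Rightarrow> bool" where
  "smooth2 u \<longleftrightarrow> (\<exists>S. u \<in> S \<and> (\<forall>v\<in>S. continuous_on UNIV v \<and>
      (\<forall>x y. (\<lambda>t. v (t, y)) differentiable (at x) \<and> (\<lambda>t. v (x, t)) differentiable (at y)) \<and>
      pd1 v \<in> S \<and> pd2 v \<in> S))"

definition test_fun :: "(real \<times> real \<Rightarrow> complex) \<Rightarrow> bool" where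
  "test_fun u \<longleftrightarrow> smooth2 u \<and> compact (closure {p. u p \<noteq> 0})"

definition weak_pd1 :: "(real \<times> real \<Rightarrow> complex) \<Rightarrow> (real \<times> real \<Rightarrow> complex) \<Rightarrow> bool" where
  "weak_pd1 f g \<longleftrightarrow> locally_integrable2 f \<and> locally_integrable2 g \<and>
     (\<forall>u. test_fun u \<longrightarrow>
        (LINT p|lborel. f p * pd1 u p) = - (LINT p|lborel. g p * u p))"

definition weak_pd2 :: "(real \<times> real \<Rightarrow> complex) \<Rightarrow> (real \<times> real \<Rightarrow> complex) \<Rightarrow> bool" where
  "weak_pd2 f g \<longleftrightarrow> locally_integrable2 f \<and> locally_integrable2 g \<and>
     (\<forall>u. test_fun u \<longrightarrow>
        (LINT p|lborel. f p * pd2 u p) = - (LINT p|lborel. g p * u p))"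

definition H1_torus :: "(real \<times> real \<Rightarrow> complex) \<Rightarrow> bool" where
  "H1_torus f \<longleftrightarrow> biperiodic f \<and> torus_L2 f \<and>
     (\<exists>g1. weak_pd1 f g1 \<and> torus_L2 g1) \<and> (\<exists>g2. weak_pd2 f g2 \<and> torus_L2 g2)"

definition sph :: "real \<times> real \<Rightarrow> real^3" where
  "sph p = vector [cos (fst p) * sin (snd p), sin (fst p) * sin (snd p), cos (snd p)]"

definition DFS :: "(real^3 \<Rightarrow> complex) \<Rightarrow> real \<times> real \<Rightarrow> complex" where
  "DFS f = f \<circ> sph"

text \<open>f in L2(S^2), surface measure in spherical coordinates\<close>
definition sphere_L2 :: "(real^3 \<Rightarrow> complex) \<Rightarrow> bool" where
  "sphere_L2 f \<longleftrightarrow> set_integrable lborel ({-pi..pi} \<times> {0..pi})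
      (\<lambda>p. (cmod (f (sph p)))\<^sup>2 * sin (snd p))"

definition sphere_L2sq :: "(real^3 \<Rightarrow> complex) \<Rightarrow> real" where
  "sphere_L2sq f = (LINT p:({-pi..pi} \<times> {0..pi})|lborel. (cmod (f (sph p)))\<^sup>2 * sin (snd p))"

definition radial_ext :: "(real^3 \<Rightarrow> complex) \<Rightarrow> real^3 \<Rightarrow> complex" where
  "radial_ext f x = f (x /\<^sub>R norm x)"

text \<open>i-th component of the surface gradient\<close>
definition sgrad :: "(real^3 \<Rightarrow> complex) \<Rightarrow> 3 \<Rightarrow> real^3 \<Rightarrow> complex" where
  "sgrad f i x = frechet_derivative (radial_ext f) (at x) (axis i 1)"

definition C1_sphere :: "(real^3 \<Rightarrow> complex) \<Rightarrow> bool" where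
  "C1_sphere f \<longleftrightarrow> (\<exists>U F F'. open U \<and> sphere 0 1 \<subseteq> U \<and> (\<forall>x\<in>sphere 0 1. F x = f x) \<and>
      (\<forall>x\<in>U. (F has_derivative F' x) (at x)) \<and> (\<forall>v. continuous_on U (\<lambda>x. F' x v)))"

definition H1_sphere_sq :: "(real^3 \<Rightarrow> complex) \<Rightarrow> real" where
  "H1_sphere_sq f = (\<Sum>i\<in>UNIV. sphere_L2sq (sgrad f i)) + 1/4 * sphere_L2sq f"

definition C1_fin :: "(real^3 \<Rightarrow> complex) \<Rightarrow> bool" where
  "C1_fin f \<longleftrightarrow> C1_sphere f \<and> sphere_L2 f \<and> (\<forall>i. sphere_L2 (sgrad f i))"

text \<open>H^1(S^2): closure of C1_fin in the H^1 norm, realized inside L2(S^2)\<close>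
definition H1_sphere :: "(real^3 \<Rightarrow> complex) \<Rightarrow> bool" where
  "H1_sphere f \<longleftrightarrow> sphere_L2 f \<and>
     (\<exists>fs. (\<forall>n. C1_fin (fs n)) \<and>
        (\<forall>e>0. \<exists>N. \<forall>m\<ge>N. \<forall>n\<ge>N. H1_sphere_sq (\<lambda>x. fs m x - fs n x) < e) \<and>
        (\<lambda>n. sphere_L2sq (\<lambda>x. fs n x - f x)) \<longlonglongrightarrow> 0)"

end

theory Submission
  imports Defs "HOL-Computational_Algebra.Polynomial" "HOL-Real_Asymp.Real_Asymp"
begin

text \<open>In spherical coordinates \<open>f\<close> is \<open>\<theta> \<mapsto> ln (ln 8 - ln (sin \<theta>))\<close>, whose \<open>\<theta>\<close>-derivative behaves like
  \<open>1 / (\<theta> ln (1/\<theta>))\<close> at the poles: square integrable against the surface weight \<open>sin \<theta>\<close>, but not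
  against \<open>d\<theta>\<close>.
  On the sphere, the smooth zonal functions obtained by replacing \<open>1 - \<xi>\<^sub>3\<^sup>2\<close> with \<open>1 - \<xi>\<^sub>3\<^sup>2 + d\<close>
  converge to \<open>f\<close> in \<open>H\<^sup>1\<close> as \<open>d \<rightarrow> 0\<close> by dominated convergence, since their gradients are
  dominated by that of \<open>f\<close>.
  On the torus, a weak \<open>\<theta>\<close>-derivative \<open>g \<in> L\<^sub>2\<close> of the DFS function is tested against
  \<open>bump \<lambda> \<cdot> bump (\<theta>/\<epsilon>)\<close>: integration by parts bounds the pairing from below by a multiple of
  \<open>1 / ln (1/\<epsilon>)\<close>, whereas the \<open>L\<^sub>2\<close> bound on \<open>g\<close> makes it \<open>O(\<surd>\<epsilon>)\<close>.\<close>

section \<open>Smooth functions of one variable and bump functions\<close>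

definition smooth_real :: "(real \<Rightarrow> real) \<Rightarrow> bool" where
  "smooth_real h \<longleftrightarrow> (\<exists>S. h \<in> S \<and> (\<forall>v\<in>S. (\<forall>x. v differentiable (at x)) \<and> deriv v \<in> S))"

lemma smooth_realI:
  assumes "h \<in> S" "\<And>v. v \<in> S \<Longrightarrow> (\<forall>x. v differentiable (at x)) \<and> deriv v \<in> S"
  shows "smooth_real h"
  using assms unfolding smooth_real_def by blast

lemma smooth_real_deriv: "smooth_real h \<Longrightarrow> smooth_real (deriv h)"
  unfolding smooth_real_def by blast

lemma smooth_real_has_real_derivative:
  "smooth_real h \<Longrightarrow> (h has_real_derivative deriv h x) (at x)"
  unfolding smooth_real_def using DERIV_deriv_iff_real_differentiable by blast

lemma continuous_on_smooth_real: "smooth_real h \<Longrightarrow> continuous_on A h"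
  by (meson DERIV_isCont continuous_at_imp_continuous_on smooth_real_has_real_derivative)

lemma smooth_real_affine:
  assumes "smooth_real h"
  shows "smooth_real (\<lambda>x. h (c * x + d))"
proof (rule smooth_realI[where S = "{\<lambda>x. k * w (c * x + d) | k w. smooth_real w}"])
  show "(\<lambda>x. h (c * x + d)) \<in> {\<lambda>x. k * w (c * x + d) | k w. smooth_real w}"
    using assms by (intro CollectI exI[of _ 1] exI[of _ h]) auto
next
  fix v assume "v \<in> {\<lambda>x. k * w (c * x + d) | k w. smooth_real w}"
  then obtain k w where v: "v = (\<lambda>x. k * w (c * x + d))" and w: "smooth_real w" by blast
  have D: "(v has_real_derivative k * (deriv w (c * x + d) * c)) (at x)" for x
    unfolding v
    by (intro DERIV_cmult DERIV_chain2[OF smooth_real_has_real_derivative[OF w]] derivative_eq_intros)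
       auto
  then have "deriv v = (\<lambda>x. (k * c) * deriv w (c * x + d))"
    using DERIV_imp_deriv[OF D] by (auto simp: algebra_simps)
  then show "(\<forall>x. v differentiable (at x)) \<and> deriv v \<in> {\<lambda>x. k * w (c * x + d) | k w. smooth_real w}"
    using D w smooth_real_deriv real_differentiable_def by blast
qed

lemma has_real_derivative_sum_products:
  assumes "\<forall>(a, b) \<in> set ps. smooth_real a \<and> smooth_real b"
  shows "((\<lambda>x. \<Sum>(a, b)\<leftarrow>ps. a x * b x) has_real_derivative
           (\<Sum>(a, b)\<leftarrow>ps. deriv a x * b x + a x * deriv b x)) (at x)"
  using assms
proof (induction ps)
  case (Cons p ps)
  obtain a b where p: "p = (a, b)" by fastforce
  with Cons.prems have "smooth_real a" "smooth_real b" by auto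
  then have "((\<lambda>x. a x * b x) has_real_derivative deriv a x * b x + a x * deriv b x) (at x)"
    by (auto intro!: derivative_eq_intros smooth_real_has_real_derivative)
  with Cons show ?case
    unfolding p by (auto intro!: DERIV_add)
qed simp

text \<open>Witness set: by the Leibniz rule, finite sums of products of smooth functions are closed under
  differentiation.\<close>

lemma smooth_real_mult:
  assumes "smooth_real a" "smooth_real b"
  shows "smooth_real (\<lambda>x. a x * b x)"
proof -
  let ?S = "{\<lambda>x. \<Sum>(a, b)\<leftarrow>ps. a x * b x | ps. \<forall>(a, b) \<in> set ps. smooth_real a \<and> smooth_real b}"
  show ?thesis
  proof (rule smooth_realI[where S = ?S])
    show "(\<lambda>x. a x * b x) \<in> ?S"
      using assms by (intro CollectI exI[of _ "[(a, b)]"]) auto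
  next
    fix v assume "v \<in> ?S"
    then obtain ps where v: "v = (\<lambda>x. \<Sum>(a, b)\<leftarrow>ps. a x * b x)"
      and ps: "\<forall>(a, b) \<in> set ps. smooth_real a \<and> smooth_real b" by blast
    define qs where "qs = concat (map (\<lambda>(a, b). [(deriv a, b), (a, deriv b)]) ps)"
    have "(\<Sum>(a, b)\<leftarrow>ps. deriv a x * b x + a x * deriv b x) = (\<Sum>(a, b)\<leftarrow>qs. a x * b x)" for x
      unfolding qs_def by (induction ps) (simp_all add: split_beta)
    then have D: "(v has_real_derivative (\<Sum>(a, b)\<leftarrow>qs. a x * b x)) (at x)" for x
      using has_real_derivative_sum_products[OF ps, of x] v by simp
    have "deriv v = (\<lambda>x. \<Sum>(a, b)\<leftarrow>qs. a x * b x)"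
      using DERIV_imp_deriv[OF D] by auto
    moreover have "\<forall>(a, b) \<in> set qs. smooth_real a \<and> smooth_real b"
      using ps by (auto simp: qs_def smooth_real_deriv)
    ultimately have "deriv v \<in> ?S"
      by (intro CollectI exI[of _ qs]) simp
    with D show "(\<forall>x. v differentiable (at x)) \<and> deriv v \<in> ?S"
      using real_differentiable_def by blast
  qed
qed

lemma tendsto_poly_div_exp_at_top: "((\<lambda>y. poly p y / exp y) \<longlongrightarrow> (0::real)) at_top"
proof -
  have "((\<lambda>y. \<Sum>i\<le>degree p. coeff p i * (y ^ i / exp y)) \<longlongrightarrow> (\<Sum>i\<le>degree p. coeff p i * 0)) at_top"
    by (intro tendsto_sum tendsto_mult tendsto_const tendsto_power_div_exp_0)
  then show ?thesis
    by (simp add: poly_altdef sum_divide_distrib)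
qed

text \<open>The derivative of \<open>p(1/x) e\<^sup>-\<^sup>1\<^sup>/\<^sup>x\<close> has the same form, and all these functions are flat at 0.\<close>

definition flat_exp :: "real poly \<Rightarrow> real \<Rightarrow> real" where
  "flat_exp p x = (if 0 < x then poly p (1/x) * exp (-1/x) else 0)"

lemma has_real_derivative_flat_exp:
  "(flat_exp p has_real_derivative flat_exp ([:0, 0, 1:] * (p - pderiv p)) x) (at x)"
proof (cases x "0::real" rule: linorder_cases)
  case less
  have "((\<lambda>x. 0) has_real_derivative flat_exp q x) (at x)" for q
    using less by (simp add: flat_exp_def)
  then show ?thesis
    by (rule has_field_derivative_transform_within_open[where S = "{..<0}"])
       (use less in \<open>auto simp: flat_exp_def\<close>)
next
  case equal
  have lim: "((\<lambda>h. poly ([:0, 1:] * p) (inverse h) / exp (inverse h)) \<longlongrightarrow> 0) (at_right 0)"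
    by (rule filterlim_compose[OF tendsto_poly_div_exp_at_top filterlim_inverse_at_top_right])
  have "((\<lambda>h. (flat_exp p (0 + h) - flat_exp p 0) / h) \<longlongrightarrow> 0) (at_right 0)"
    apply (rule Lim_transform_eventually[OF lim])
    apply (simp add: eventually_at_right_field)
    apply (rule exI[of _ 1])
    apply (auto simp: flat_exp_def field_simps exp_minus)
    done
  moreover have "((\<lambda>h. (flat_exp p (0 + h) - flat_exp p 0) / h) \<longlongrightarrow> 0) (at_left 0)"
    by (rule tendsto_eventually)
       (auto simp: eventually_at_left_field flat_exp_def intro: exI[of _ "-1"])
  ultimately show ?thesis
    using equal by (simp add: DERIV_def filterlim_at_split flat_exp_def)
next
  case greater
  have D: "((\<lambda>x. poly p (1/x) * exp (-1/x)) has_real_derivative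
      poly (pderiv p) (1/x) * (-1/x\<^sup>2) * exp (-1/x) + poly p (1/x) * (exp (-1/x) * (1/x\<^sup>2))) (at x)"
    using greater
    by (auto intro!: derivative_eq_intros DERIV_chain2[OF poly_DERIV]
             simp: power2_eq_square field_simps)
  have e: "poly (pderiv p) (1/x) * (-1/x\<^sup>2) * exp (-1/x) + poly p (1/x) * (exp (-1/x) * (1/x\<^sup>2))
      = flat_exp ([:0, 0, 1:] * (p - pderiv p)) x"
    using greater by (simp add: flat_exp_def poly_pCons power2_eq_square field_simps)
  show ?thesis
    by (rule has_field_derivative_transform_within_open[where S = "{0<..}", OF D[unfolded e]])
       (use greater in \<open>auto simp: flat_exp_def\<close>)
qed

lemma smooth_real_flat_exp: "smooth_real (flat_exp p)"
proof (rule smooth_realI[where S = "range flat_exp"])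
  fix v assume "v \<in> range flat_exp"
  then obtain q where v: "v = flat_exp q" by auto
  then have "deriv v = flat_exp ([:0, 0, 1:] * (q - pderiv q))"
    using DERIV_imp_deriv[OF has_real_derivative_flat_exp] by auto
  then show "(\<forall>x. v differentiable at x) \<and> deriv v \<in> range flat_exp"
    using has_real_derivative_flat_exp v real_differentiable_def by blast
qed auto

lemma flat_exp_1: "flat_exp 1 x = (if 0 < x then exp (-1/x) else 0)"
  by (simp add: flat_exp_def)

definition bump :: "real \<Rightarrow> real" where
  "bump t = flat_exp 1 (t - 1) * flat_exp 1 (2 - t)"

lemma smooth_real_bump: "smooth_real bump"
proof -
  have "smooth_real (\<lambda>t. flat_exp 1 (1 * t + -1) * flat_exp 1 ((-1) * t + 2))"
    by (intro smooth_real_mult smooth_real_affine smooth_real_flat_exp)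
  then show ?thesis
    by (simp add: bump_def[abs_def])
qed

lemma bump_nonneg: "0 \<le> bump t" and bump_le_1: "bump t \<le> 1"
  by (auto simp: bump_def flat_exp_1 intro: mult_le_one)

lemma bump_eq_0: "t \<notin> {1<..<2} \<Longrightarrow> bump t = 0"
  by (auto simp: bump_def flat_exp_1)

lemma exp_le_bump:
  assumes "5/4 \<le> t" "t \<le> 7/4"
  shows "exp (-8) \<le> bump t"
proof -
  have "exp (-4) \<le> flat_exp 1 (t - 1)" "exp (-4) \<le> flat_exp 1 (2 - t)"
    using assms by (auto simp: flat_exp_1 field_simps)
  then have "exp (-4) * exp (-4) \<le> bump t"
    unfolding bump_def by (intro mult_mono) (auto simp: flat_exp_1)
  then show ?thesis
    by (simp flip: exp_add)
qed

lemma integral_bump_ge: "exp (-8) / 2 \<le> integral {1..2} bump"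
proof -
  have cont: "continuous_on A bump" for A
    by (rule continuous_on_smooth_real[OF smooth_real_bump])
  have "integral {5/4..7/4::real} (\<lambda>t. exp (-8)) \<le> integral {5/4..7/4} bump"
    by (rule integral_le) (auto intro: integrable_continuous_interval cont exp_le_bump)
  also have "\<dots> \<le> integral {1..2} bump"
    by (rule integral_subset_le) (auto intro: integrable_continuous_interval cont bump_nonneg)
  finally show ?thesis by simp
qed

lemma deriv_eq_0_outside:
  fixes h :: "real \<Rightarrow> real"
  assumes "\<And>t. t \<notin> {a<..<b} \<Longrightarrow> h t = 0" "t \<notin> {a..b}"
  shows "deriv h t = 0"
proof -
  have "(h has_real_derivative 0) (at t)"
    by (rule has_field_derivative_transform_within_open[where f = "\<lambda>x. 0" and S = "- {a..b}"])
       (use assms in auto)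
  then show ?thesis
    by (rule DERIV_imp_deriv)
qed

definition bump_scaled :: "real \<Rightarrow> real \<Rightarrow> real" where
  "bump_scaled e t = bump (t / e)"

lemma smooth_real_bump_scaled: "smooth_real (bump_scaled e)"
proof -
  have "smooth_real (\<lambda>t. bump ((1 / e) * t + 0))"
    by (intro smooth_real_affine smooth_real_bump)
  then show ?thesis
    by (simp add: bump_scaled_def[abs_def])
qed

lemma bump_scaled_eq_0: "0 < e \<Longrightarrow> t \<notin> {e<..<2*e} \<Longrightarrow> bump_scaled e t = 0"
  unfolding bump_scaled_def by (rule bump_eq_0) (auto simp: field_simps)

lemma bump_scaled_nonneg: "0 \<le> bump_scaled e t" and bump_scaled_le_1: "bump_scaled e t \<le> 1"
  unfolding bump_scaled_def using bump_nonneg bump_le_1 by auto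

lemma exp_le_bump_scaled: "0 < e \<Longrightarrow> 5*e/4 \<le> t \<Longrightarrow> t \<le> 7*e/4 \<Longrightarrow> exp (-8) \<le> bump_scaled e t"
  unfolding bump_scaled_def by (rule exp_le_bump) (auto simp: field_simps)

section \<open>Test functions and integrals on the plane\<close>

definition tensor_fun :: "(real \<Rightarrow> real) \<Rightarrow> (real \<Rightarrow> real) \<Rightarrow> real \<times> real \<Rightarrow> complex" where
  "tensor_fun a b p = complex_of_real (a (fst p) * b (snd p))"

lemma pd1_tensor_fun: "smooth_real a \<Longrightarrow> pd1 (tensor_fun a b) = tensor_fun (deriv a) b"
  unfolding pd1_def tensor_fun_def fun_eq_iff fst_conv snd_conv
  by (rule allI, rule vector_derivative_at, rule has_vector_derivative_of_real,
      rule DERIV_cmult_right, erule smooth_real_has_real_derivative)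

lemma pd2_tensor_fun: "smooth_real b \<Longrightarrow> pd2 (tensor_fun a b) = tensor_fun a (deriv b)"
  unfolding pd2_def tensor_fun_def fun_eq_iff fst_conv snd_conv
  by (rule allI, rule vector_derivative_at, rule has_vector_derivative_of_real,
      rule DERIV_cmult, erule smooth_real_has_real_derivative)

lemma smooth2_tensor_fun:
  assumes "smooth_real a" "smooth_real b"
  shows "smooth2 (tensor_fun a b)"
  unfolding smooth2_def
proof (intro exI[of _ "{tensor_fun a b | a b. smooth_real a \<and> smooth_real b}"] conjI ballI)
  show "tensor_fun a b \<in> {tensor_fun a b | a b. smooth_real a \<and> smooth_real b}"
    using assms by blast
next
  fix v assume "v \<in> {tensor_fun a b | a b. smooth_real a \<and> smooth_real b}"
  then obtain a b where v: "v = tensor_fun a b" and ab: "smooth_real a" "smooth_real b" by blast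
  have "continuous_on UNIV (\<lambda>p::real \<times> real. a (fst p))"
    by (rule continuous_on_compose2[OF continuous_on_smooth_real[OF ab(1)] continuous_on_fst])
       (auto intro: continuous_on_id)
  moreover have "continuous_on UNIV (\<lambda>p::real \<times> real. b (snd p))"
    by (rule continuous_on_compose2[OF continuous_on_smooth_real[OF ab(2)] continuous_on_snd])
       (auto intro: continuous_on_id)
  ultimately show "continuous_on UNIV v"
    unfolding v tensor_fun_def by (intro continuous_intros)
  show "\<forall>x y. (\<lambda>t. v (t, y)) differentiable at x \<and> (\<lambda>t. v (x, t)) differentiable at y"
  proof (intro allI conjI)
    fix x y
    show "(\<lambda>t. v (t, y)) differentiable at x"
      unfolding v tensor_fun_def fst_conv snd_conv
      by (rule differentiableI_vector, rule has_vector_derivative_of_real, rule DERIV_cmult_right,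
          rule smooth_real_has_real_derivative[OF ab(1)])
    show "(\<lambda>t. v (x, t)) differentiable at y"
      unfolding v tensor_fun_def fst_conv snd_conv
      by (rule differentiableI_vector, rule has_vector_derivative_of_real, rule DERIV_cmult,
          rule smooth_real_has_real_derivative[OF ab(2)])
  qed
  show "pd1 v \<in> {tensor_fun a b | a b. smooth_real a \<and> smooth_real b}"
    "pd2 v \<in> {tensor_fun a b | a b. smooth_real a \<and> smooth_real b}"
    using ab by (auto simp: v pd1_tensor_fun pd2_tensor_fun intro: smooth_real_deriv)
qed

lemma test_fun_tensor_fun:
  assumes "smooth_real a" "smooth_real b"
    and "\<And>x. x \<notin> {a1..a2} \<Longrightarrow> a x = 0" "\<And>y. y \<notin> {b1..b2} \<Longrightarrow> b y = 0"
  shows "test_fun (tensor_fun a b)"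
proof -
  have "{p. tensor_fun a b p \<noteq> 0} \<subseteq> {a1..a2} \<times> {b1..b2}"
    using assms(3,4) by (force simp: tensor_fun_def)
  then have "closure {p. tensor_fun a b p \<noteq> 0} \<subseteq> {a1..a2} \<times> {b1..b2}"
    by (intro closure_minimal) (auto intro: closed_Times)
  then have "compact (closure {p. tensor_fun a b p \<noteq> 0})"
    using compact_Int_closed[OF compact_Times[OF compact_Icc compact_Icc] closed_closure]
    by (metis Int_absorb1)
  then show ?thesis
    unfolding test_fun_def using smooth2_tensor_fun[OF assms(1,2)] by blast
qed

lemma
  fixes a b :: "real \<Rightarrow> real"
  assumes a: "integrable lborel a" and b: "integrable lborel b"
  shows integrable_lborel_product: "integrable lborel (\<lambda>p::real \<times> real. a (fst p) * b (snd p))"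
    and integral_lborel_product:
      "(LINT p|lborel. a (fst p) * b (snd p)) = (LINT x|lborel. a x) * (LINT y|lborel. b y)"
proof -
  have [measurable]: "a \<in> borel_measurable lborel" "b \<in> borel_measurable lborel"
    using a b by auto
  have I: "integrable (lborel \<Otimes>\<^sub>M lborel) (\<lambda>p::real \<times> real. a (fst p) * b (snd p))"
  proof (rule lborel_pair.Fubini_integrable)
    have "integrable lborel (\<lambda>x. \<bar>a x\<bar> * (LINT y|lborel. \<bar>b y\<bar>))"
      using a by auto
    then show "integrable lborel (\<lambda>x. LINT y|lborel. norm (a (fst (x, y)) * b (snd (x, y))))"
      by (simp add: abs_mult)
  qed (use b in auto)
  then show "integrable lborel (\<lambda>p::real \<times> real. a (fst p) * b (snd p))"
    by (simp add: lborel_prod)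
  have "(LINT p|(lborel \<Otimes>\<^sub>M lborel). a (fst p) * b (snd p)) = (LINT x|lborel. LINT y|lborel. a x * b y)"
    using lborel_pair.integral_fst'[OF I] by simp
  then show "(LINT p|lborel. a (fst p) * b (snd p)) = (LINT x|lborel. a x) * (LINT y|lborel. b y)"
    by (simp add: lborel_prod)
qed

lemma
  fixes g h :: "real \<Rightarrow> real"
  assumes "continuous_on {l..u} h" "\<And>x. x \<notin> {l..u} \<Longrightarrow> g x = 0" "\<And>x. x \<in> {l..u} \<Longrightarrow> g x = h x"
  shows integrable_vanishing_outside: "integrable lborel g"
    and integral_vanishing_outside: "(LINT x|lborel. g x) = integral {l..u} h"
proof -
  have g: "g = (\<lambda>x. indicator {l..u} x *\<^sub>R h x)"
    using assms(2,3) by (auto simp: indicator_def fun_eq_iff)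
  have "integrable lborel (\<lambda>x. indicator {l..u} x *\<^sub>R h x)"
    by (rule borel_integrable_compact) (auto intro: assms(1))
  then show "integrable lborel g"
    using g by simp
  then have "set_integrable lborel {l..u} h"
    using g by (simp add: set_integrable_def)
  from set_borel_integral_eq_integral(2)[OF this]
  show "(LINT x|lborel. g x) = integral {l..u} h"
    using g by (simp add: set_lebesgue_integral_def)
qed

lemma integral_by_parts_vanishing_ends:
  fixes G G' \<phi> \<phi>' :: "real \<Rightarrow> real"
  assumes "a \<le> b"
    and "\<And>t. t \<in> {a..b} \<Longrightarrow> (G has_real_derivative G' t) (at t)"
    and "\<And>t. t \<in> {a..b} \<Longrightarrow> (\<phi> has_real_derivative \<phi>' t) (at t)"
    and "continuous_on {a..b} G'" "continuous_on {a..b} \<phi>"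
    and "\<phi> a = 0" "\<phi> b = 0"
  shows "integral {a..b} (\<lambda>t. G t * \<phi>' t) = integral {a..b} (\<lambda>t. - G' t * \<phi> t)"
proof -
  have "((\<lambda>t. G' t * \<phi> t + G t * \<phi>' t) has_integral G b * \<phi> b - G a * \<phi> a) {a..b}"
  proof (rule fundamental_theorem_of_calculus[where f = "\<lambda>t. G t * \<phi> t", OF assms(1)])
    fix t assume "t \<in> {a..b}"
    then have "((\<lambda>t. G t * \<phi> t) has_real_derivative G' t * \<phi> t + G t * \<phi>' t) (at t)"
      using DERIV_mult[OF assms(2,3)] by (simp add: algebra_simps)
    then show "((\<lambda>t. G t * \<phi> t) has_vector_derivative G' t * \<phi> t + G t * \<phi>' t) (at t within {a..b})"
      unfolding has_real_derivative_iff_has_vector_derivative by (rule has_vector_derivative_at_within)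
  qed
  then have "((\<lambda>t. G' t * \<phi> t + G t * \<phi>' t) has_integral 0) {a..b}"
    using assms(6,7) by simp
  moreover have "(\<lambda>t. G' t * \<phi> t) integrable_on {a..b}"
    by (intro integrable_continuous_interval continuous_intros assms(4,5))
  ultimately have "((\<lambda>t. (G' t * \<phi> t + G t * \<phi>' t) - G' t * \<phi> t) has_integral
      0 - integral {a..b} (\<lambda>t. G' t * \<phi> t)) {a..b}"
    by (intro has_integral_diff integrable_integral)
  then have "integral {a..b} (\<lambda>t. G t * \<phi>' t) = - integral {a..b} (\<lambda>t. G' t * \<phi> t)"
    using integral_unique by force
  also have "\<dots> = integral {a..b} (\<lambda>t. - (G' t * \<phi> t))"
    by (rule integral_neg[symmetric])
  finally show ?thesis
    by simp
qed

section \<open>The profile of the function and its regularisations\<close>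

lemma ln_8_ge_2: "2 \<le> ln (8::real)"
proof -
  have "ln (8::real) = 3 * ln 2"
    using ln_realpow[of 2 3] by simp
  then show ?thesis
    using ln2_ge_two_thirds by simp
qed

lemma mult_const_minus_ln_mono:
  fixes a b B C k :: real
  assumes "0 < a" "a \<le> b" "b \<le> B" "0 \<le> k" "k * ln B + k \<le> C"
  shows "a * (C - k * ln a) \<le> b * (C - k * ln b)"
proof (rule DERIV_nonneg_imp_nondecreasing[OF assms(2)])
  fix x assume x: "a \<le> x" "x \<le> b"
  then have "0 < x"
    using assms by auto
  then have "DERIV (\<lambda>t. t * (C - k * ln t)) x :> 1 * (C - k * ln x) + x * (0 - k * (1/x))"
    by (intro derivative_eq_intros) auto
  moreover
  have "k * ln x \<le> k * ln B"
    using \<open>0 < x\<close> x assms by (intro mult_left_mono) auto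
  with \<open>0 < x\<close> assms have "0 \<le> 1 * (C - k * ln x) + x * (0 - k * (1/x))"
    by (simp add: field_simps)
  ultimately show "\<exists>y. DERIV (\<lambda>t. t * (C - k * ln t)) x :> y \<and> 0 \<le> y"
    by blast
qed

text \<open>\<open>ell (1 - s\<^sup>2) = ln (8 / sqrt (1 - s\<^sup>2))\<close>, so \<open>profile 0\<close> is the profile of the function of the
  theorem on \<open>]-1, 1[\<close>, and for \<open>d > 0\<close> \<open>profile d\<close> is a regularisation that is smooth near \<open>[-1, 1]\<close>.\<close>

definition ell :: "real \<Rightarrow> real" where
  "ell x = ln 8 - ln x / 2"

definition profile :: "real \<Rightarrow> real \<Rightarrow> real" where
  "profile d s = ln (ell (1 - s\<^sup>2 + d))"

definition profile' :: "real \<Rightarrow> real \<Rightarrow> real" where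
  "profile' d s = s / ((1 - s\<^sup>2 + d) * ell (1 - s\<^sup>2 + d))"

definition f_profile :: "real \<Rightarrow> real" where
  "f_profile s = (if \<bar>s\<bar> \<noteq> 1 then ln (ln (8 / sqrt (1 - s\<^sup>2))) else 0)"

text \<open>Up to sign, \<open>slope d \<theta>\<close> is the derivative of \<open>\<theta> \<mapsto> profile d (cos \<theta>)\<close>.\<close>

definition slope :: "real \<Rightarrow> real \<Rightarrow> real" where
  "slope d t = profile' d (cos t) * sin t"

lemma ell_ge_1: "0 < x \<Longrightarrow> x \<le> 2 \<Longrightarrow> 1 \<le> ell x"
  using ln_le_minus_one[of x] ln_8_ge_2 by (simp add: ell_def)

lemma ell_sin_sq: "0 < sin t \<Longrightarrow> ell ((sin t)\<^sup>2) = ln 8 - ln (sin t)"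
  by (simp add: ell_def ln_realpow)

lemma has_real_derivative_profile:
  assumes "0 < 1 - s\<^sup>2 + d" "1 - s\<^sup>2 + d \<le> 2"
  shows "(profile d has_real_derivative profile' d s) (at s)"
proof -
  let ?x = "1 - s\<^sup>2 + d"
  have ell: "0 < ell ?x"
    using ell_ge_1[OF assms] by linarith
  have "((\<lambda>s. 1 - s\<^sup>2 + d) has_real_derivative - 2 * s) (at s)"
    by (auto intro!: derivative_eq_intros)
  from DERIV_chain2[OF DERIV_ln[OF assms(1)] this]
  have "((\<lambda>s. ell (1 - s\<^sup>2 + d)) has_real_derivative 0 - inverse ?x * (- 2 * s) / 2) (at s)"
    unfolding ell_def by (intro DERIV_diff DERIV_const DERIV_cdivide) simp
  from DERIV_chain2[OF DERIV_ln[OF ell] this]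
  have "(profile d has_real_derivative inverse (ell ?x) * (0 - inverse ?x * (- 2 * s) / 2)) (at s)"
    by (simp add: profile_def[abs_def])
  moreover have "inverse E * (0 - inverse x * (- 2 * s) / 2) = s / (x * E)" for E x :: real
    by (simp add: inverse_eq_divide)
  ultimately show ?thesis
    by (simp only: profile'_def)
qed

lemma f_profile_eq_profile: "\<bar>s\<bar> < 1 \<Longrightarrow> f_profile s = profile 0 s"
proof -
  assume "\<bar>s\<bar> < 1"
  then have "0 < 1 - s\<^sup>2"
    by (simp add: abs_square_less_1)
  with \<open>\<bar>s\<bar> < 1\<close> show ?thesis
    by (simp add: f_profile_def profile_def ell_def ln_div ln_sqrt)
qed

lemma abs_cos_less_1: "sin (t::real) \<noteq> 0 \<Longrightarrow> \<bar>cos t\<bar> < 1"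
  using sin_cos_squared_add[of t] abs_square_less_1[of "cos t"] by (smt (verit) zero_less_power2)

lemma profile_cos: "0 < sin t \<Longrightarrow> profile 0 (cos t) = ln (ln 8 - ln (sin t))"
  by (simp add: profile_def ell_sin_sq flip: sin_squared_eq)

lemma ln_8_minus_ln_sin_ge_2: "0 < sin (t::real) \<Longrightarrow> 2 \<le> ln 8 - ln (sin t)"
  using ln_8_ge_2 ln_le_zero_iff[of "sin t"] sin_le_one[of t] by linarith

lemma slope_0_eq:
  assumes "0 < sin t"
  shows "slope 0 t = cos t / (sin t * (ln 8 - ln (sin t)))"
proof -
  have "slope 0 t = cos t / ((sin t)\<^sup>2 * ell ((sin t)\<^sup>2)) * sin t"
    by (simp add: slope_def profile'_def sin_squared_eq)
  also have "\<dots> = cos t / ((sin t)\<^sup>2 * (ln 8 - ln (sin t))) * sin t"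
    using ell_sin_sq[OF assms] by simp
  finally show ?thesis
    using assms ln_8_minus_ln_sin_ge_2[OF assms] by (simp add: power2_eq_square)
qed

lemma has_real_derivative_profile_cos:
  assumes "0 < sin t"
  shows "((\<lambda>t. profile 0 (cos t)) has_real_derivative - slope 0 t) (at t)"
proof -
  have "0 < 1 - (cos t)\<^sup>2 + 0" "1 - (cos t)\<^sup>2 + 0 \<le> 2"
    using assms abs_square_le_1[of "sin t"] by (simp_all add: sin_squared_eq[symmetric])
  from DERIV_chain2[OF has_real_derivative_profile[OF this] DERIV_cos]
  show ?thesis
    by (simp add: slope_def)
qed
lemma slope_eq: "slope d t = cos t * sin t / (((sin t)\<^sup>2 + d) * ell ((sin t)\<^sup>2 + d))"
  by (simp add: slope_def profile'_def sin_squared_eq)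

lemma profile_cos_eq: "profile d (cos t) = ln (ell ((sin t)\<^sup>2 + d))"
  by (simp add: profile_def sin_squared_eq)

lemma slope_0_ge:
  assumes "0 < e" "2 * e \<le> 1" "e \<le> t" "t \<le> 2 * e"
  shows "1 / (4 * e * (ln 8 - ln e)) \<le> slope 0 t"
proof -
  have t: "0 < t" "t \<le> 1" "t < pi"
    using assms pi_gt3 by auto
  have s: "0 < sin t" "sin t \<le> 2 * e"
    using sin_gt_zero[OF t(1,3)] sin_x_le_x[of t] t assms by auto
  have "cos (pi/3) \<le> cos t"
    using t pi_gt3 by (subst cos_mono_le_eq) auto
  then have c: "1/2 \<le> cos t"
    by (simp add: cos_60)
  have "sin t * (ln 8 - 1 * ln (sin t)) \<le> (2*e) * (ln 8 - 1 * ln (2*e))"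
    by (rule mult_const_minus_ln_mono[where B = 1]) (use s assms ln_8_ge_2 in auto)
  also have "\<dots> \<le> (2*e) * (ln 8 - ln e)"
    using assms by (intro mult_left_mono) auto
  finally have le: "sin t * (ln 8 - ln (sin t)) \<le> 2 * e * (ln 8 - ln e)"
    by simp
  have "2 \<le> ln 8 - ln (sin t)"
    by (rule ln_8_minus_ln_sin_ge_2[OF s(1)])
  with s have pos: "0 < sin t * (ln 8 - ln (sin t))"
    by (intro mult_pos_pos) linarith+
  have "1 / (4 * e * (ln 8 - ln e)) = (1/2) / (2 * e * (ln 8 - ln e))"
    by simp
  also have "\<dots> \<le> cos t / (2 * e * (ln 8 - ln e))"
    using c pos le by (intro divide_right_mono) auto
  also have "\<dots> \<le> cos t / (sin t * (ln 8 - ln (sin t)))"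
    using c pos le by (intro divide_left_mono) auto
  finally show ?thesis
    using slope_0_eq[OF s(1)] by simp
qed

lemma abs_slope_le:
  assumes "0 \<le> d" "d \<le> 1"
  shows "\<bar>slope d t\<bar> \<le> \<bar>slope 0 t\<bar>"
proof (cases "sin t = 0")
  case False
  let ?a = "(sin t)\<^sup>2" and ?b = "(sin t)\<^sup>2 + d"
  have a: "0 < ?a" "?a \<le> 1"
    using False by (simp_all add: abs_square_le_1)
  then have b: "?a \<le> ?b" "?b \<le> 2"
    using assms by auto
  have "ln 2 \<le> (1::real)"
    using ln_le_minus_one[of 2] by simp
  then have "?a * (ln 8 - 1/2 * ln ?a) \<le> ?b * (ln 8 - 1/2 * ln ?b)"
    using ln_8_ge_2 by (intro mult_const_minus_ln_mono[OF a(1) b]) auto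
  then have mono: "?a * ell ?a \<le> ?b * ell ?b"
    by (simp add: ell_def)
  have pos: "0 < ?a * ell ?a"
    using a ell_ge_1[of ?a] by simp
  have "0 < ?b"
    using a(1) assms(1) by linarith
  with b(2) have "1 \<le> ell ?b"
    by (intro ell_ge_1)
  with \<open>0 < ?b\<close> have pos_b: "0 < ?b * ell ?b"
    by simp
  have "\<bar>slope d t\<bar> = \<bar>cos t * sin t\<bar> / (?b * ell ?b)"
    using pos_b by (simp add: slope_eq abs_divide)
  also have "\<dots> \<le> \<bar>cos t * sin t\<bar> / (?a * ell ?a)"
    using pos mono by (intro divide_left_mono) auto
  also have "\<dots> = \<bar>slope 0 t\<bar>"
    using pos by (simp add: slope_eq abs_divide)
  finally show ?thesis .
qed (simp add: slope_def)

lemma slope_tendsto: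
  assumes "d \<longlonglongrightarrow> 0"
  shows "(\<lambda>n. slope (d n) t) \<longlonglongrightarrow> slope 0 t"
proof (cases "sin t = 0")
  case False
  then have a: "0 < (sin t)\<^sup>2" "(sin t)\<^sup>2 \<le> 1"
    by (simp_all add: abs_square_le_1)
  then have "0 < ell ((sin t)\<^sup>2 + 0)"
    using ell_ge_1[of "(sin t)\<^sup>2"] by simp
  then have "(\<lambda>n. cos t * sin t / (((sin t)\<^sup>2 + d n) * (ln 8 - ln ((sin t)\<^sup>2 + d n) / 2)))
      \<longlonglongrightarrow> cos t * sin t / (((sin t)\<^sup>2 + 0) * (ln 8 - ln ((sin t)\<^sup>2 + 0) / 2))"
    using a unfolding ell_def by (intro tendsto_intros assms) auto
  then show ?thesis
    unfolding slope_eq ell_def by simp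
qed (simp add: slope_def)

lemma profile_cos_bounds:
  assumes "sin t \<noteq> 0" "0 \<le> d" "d \<le> 1"
  shows "0 \<le> profile d (cos t)" "profile d (cos t) \<le> profile 0 (cos t)"
proof -
  have a: "0 < (sin t)\<^sup>2" "(sin t)\<^sup>2 \<le> 1"
    using assms(1) by (simp_all add: abs_square_le_1)
  have "1 \<le> ell ((sin t)\<^sup>2 + d)"
    using a assms by (intro ell_ge_1) linarith+
  then show "0 \<le> profile d (cos t)"
    by (simp add: profile_cos_eq)
  have "ln ((sin t)\<^sup>2) \<le> ln ((sin t)\<^sup>2 + d)"
    by (subst ln_le_cancel_iff; use a(1) assms(2) in linarith)
  then have "ell ((sin t)\<^sup>2 + d) \<le> ell ((sin t)\<^sup>2)"
    by (simp add: ell_def)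
  with \<open>1 \<le> ell ((sin t)\<^sup>2 + d)\<close> show "profile d (cos t) \<le> profile 0 (cos t)"
    by (simp add: profile_cos_eq)
qed

lemma profile_cos_tendsto:
  assumes "sin t \<noteq> 0" "d \<longlonglongrightarrow> 0"
  shows "(\<lambda>n. profile (d n) (cos t)) \<longlonglongrightarrow> profile 0 (cos t)"
proof -
  have a: "0 < (sin t)\<^sup>2" "(sin t)\<^sup>2 \<le> 1"
    using assms(1) by (simp_all add: abs_square_le_1)
  then have "0 < ell ((sin t)\<^sup>2 + 0)"
    using ell_ge_1[of "(sin t)\<^sup>2"] by simp
  then have "(\<lambda>n. ln (ln 8 - ln ((sin t)\<^sup>2 + d n) / 2)) \<longlonglongrightarrow> ln (ln 8 - ln ((sin t)\<^sup>2 + 0) / 2)"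
    using a unfolding ell_def by (intro tendsto_intros assms(2)) auto
  then show ?thesis
    unfolding profile_cos_eq ell_def by simp
qed

lemma f_profile_cos_sq_le:
  assumes "0 \<le> sin t"
  shows "(f_profile (cos t))\<^sup>2 * sin t \<le> 32"
proof (cases "sin t = 0")
  case False
  then have s: "0 < sin t" "sin t \<le> 1"
    using assms by auto
  define y where "y = ln 8 - ln (sin t)"
  have y: "2 \<le> y"
    using ln_8_minus_ln_sin_ge_2[OF s(1)] by (simp add: y_def)
  have "f_profile (cos t) = ln y"
    using f_profile_eq_profile[OF abs_cos_less_1] s profile_cos[OF s(1)] by (simp add: y_def)
  moreover have "ln y \<le> 2 * sqrt y"
    using ln_le_minus_one[of "sqrt y"] y by (simp add: ln_sqrt)
  then have "(ln y)\<^sup>2 \<le> (2 * sqrt y)\<^sup>2"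
    using y by (intro power_mono) auto
  ultimately have sq: "(f_profile (cos t))\<^sup>2 \<le> 4 * y"
    using y by (simp add: power_mult_distrib)
  have "y \<le> 8 / sin t - 1"
    using s ln_le_minus_one[of "8 / sin t"] by (simp add: y_def ln_div)
  then have "y * sin t \<le> (8 / sin t - 1) * sin t"
    using s(1) by (simp add: mult_right_mono)
  also have "\<dots> = 8 - sin t"
    using s by (simp add: field_simps)
  finally have "4 * y * sin t \<le> 32"
    using s by linarith
  moreover have "(f_profile (cos t))\<^sup>2 * sin t \<le> 4 * y * sin t"
    using sq s(1) by (simp add: mult_right_mono)
  ultimately show ?thesis
    by linarith
qed simp

lemma set_integrable_FTC_nonneg:
  fixes f F :: "real \<Rightarrow> real"
  assumes "a < b"
    and "\<And>x. x \<in> {a<..<b} \<Longrightarrow> (F has_real_derivative f x) (at x)"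
    and "\<And>x. x \<in> {a<..<b} \<Longrightarrow> isCont f x"
    and "\<And>x. x \<in> {a<..<b} \<Longrightarrow> 0 \<le> f x"
    and "(F \<longlongrightarrow> A) (at_right a)" "(F \<longlongrightarrow> B) (at_left b)"
  shows "set_integrable lborel {a<..<b} f"
proof -
  have "set_integrable lborel (einterval (ereal a) (ereal b)) f"
  proof (rule interval_integral_FTC_nonneg(1))
    show "((F \<circ> real_of_ereal) \<longlongrightarrow> A) (at_right (ereal a))"
      "((F \<circ> real_of_ereal) \<longlongrightarrow> B) (at_left (ereal b))"
      using assms(5,6) by (simp_all add: ereal_tendsto_simps1)
  qed (use assms in auto)
  then show ?thesis
    by simp
qed

text \<open>\<open>(slope 0 t)\<^sup>2 sin t\<close> is not bounded near the poles; it is dominated by \<open>\<bar>slope_majorant t\<bar>\<close>,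
  which is integrable because it has the bounded primitive \<open>\<plusminus>1 / (ln 8 - ln (sin t))\<close>, monotone on
  each half of \<open>]0, \<pi>[\<close>.\<close>

definition slope_majorant :: "real \<Rightarrow> real" where
  "slope_majorant t = cos t / (sin t * (ln 8 - ln (sin t))\<^sup>2)"

lemma has_real_derivative_inverse_ln_8_minus_ln_sin:
  assumes "0 < sin t"
  shows "((\<lambda>t. 1 / (ln 8 - ln (sin t))) has_real_derivative slope_majorant t) (at t)"
proof -
  have "((\<lambda>t. ln 8 - ln (sin t)) has_real_derivative 0 - inverse (sin t) * cos t) (at t)"
    by (intro DERIV_diff DERIV_const DERIV_chain2[OF DERIV_ln[OF assms] DERIV_sin])
  from DERIV_inverse_fun[OF this] ln_8_minus_ln_sin_ge_2[OF assms]
  have "((\<lambda>t. 1 / (ln 8 - ln (sin t))) has_real_derivative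
      - (0 - inverse (sin t) * cos t) / (ln 8 - ln (sin t))\<^sup>2) (at t)"
    by (simp add: divide_inverse power2_eq_square mult_ac)
  moreover have "- (0 - inverse s * c) / K\<^sup>2 = c / (s * K\<^sup>2)" for s c K :: real
    by (simp add: inverse_eq_divide)
  ultimately show ?thesis
    by (simp add: slope_majorant_def)
qed

lemma isCont_slope_majorant: "0 < sin t \<Longrightarrow> isCont slope_majorant t"
  unfolding slope_majorant_def[abs_def]
  using ln_8_minus_ln_sin_ge_2[of t] by (intro continuous_intros) auto

lemma
  assumes "t \<in> {0<..<pi}"
  shows slope_majorant_nonneg: "t \<le> pi/2 \<Longrightarrow> 0 \<le> slope_majorant t"
    and slope_majorant_nonpos: "pi/2 \<le> t \<Longrightarrow> slope_majorant t \<le> 0"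
proof -
  have s: "0 < sin t"
    using assms by (simp add: sin_gt_zero)
  then have "0 < sin t * (ln 8 - ln (sin t))\<^sup>2"
    using ln_8_minus_ln_sin_ge_2[OF s] by (intro mult_pos_pos) auto
  then show "t \<le> pi/2 \<Longrightarrow> 0 \<le> slope_majorant t" "pi/2 \<le> t \<Longrightarrow> slope_majorant t \<le> 0"
    using assms cos_ge_zero[of t] cos_ge_zero[of "pi - t"]
    by (auto simp: slope_majorant_def divide_nonpos_pos)
qed

lemma
  shows set_integrable_slope_majorant: "set_integrable lborel {0<..<pi/2} slope_majorant"
    and set_integrable_minus_slope_majorant: "set_integrable lborel {pi/2<..<pi} (\<lambda>t. - slope_majorant t)"
proof -
  define F where "F t = 1 / (ln 8 - ln (sin t))" for t :: real
  have F': "(F has_real_derivative slope_majorant t) (at t)" "isCont slope_majorant t"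
    if "t \<in> {0<..<pi}" for t
    unfolding F_def using that
    by (simp_all add: has_real_derivative_inverse_ln_8_minus_ln_sin isCont_slope_majorant sin_gt_zero)
  show "set_integrable lborel {0<..<pi/2} slope_majorant"
  proof (rule set_integrable_FTC_nonneg[where F = F])
    show "(F \<longlongrightarrow> 0) (at_right 0)"
      unfolding F_def by real_asymp
    show "(F \<longlongrightarrow> F (pi/2)) (at_left (pi/2))"
      unfolding F_def by (intro tendsto_intros) auto
  qed (use F' slope_majorant_nonneg in auto)
  show "set_integrable lborel {pi/2<..<pi} (\<lambda>t. - slope_majorant t)"
  proof (rule set_integrable_FTC_nonneg[where F = "\<lambda>t. - F t"])
    show "((\<lambda>t. - F t) \<longlongrightarrow> 0) (at_left pi)"
      unfolding F_def by real_asymp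
    show "((\<lambda>t. - F t) \<longlongrightarrow> - F (pi/2)) (at_right (pi/2))"
      unfolding F_def by (intro tendsto_intros) auto
  qed (use F' slope_majorant_nonpos in \<open>auto intro!: DERIV_minus continuous_intros\<close>)
qed

lemma slope_0_sq_le: "0 < sin t \<Longrightarrow> (slope 0 t)\<^sup>2 * sin t \<le> \<bar>slope_majorant t\<bar>"
proof -
  assume s: "0 < sin t"
  have K: "2 \<le> ln 8 - ln (sin t)"
    by (rule ln_8_minus_ln_sin_ge_2[OF s])
  have "(slope 0 t)\<^sup>2 * sin t = (cos t)\<^sup>2 / (sin t * (ln 8 - ln (sin t))\<^sup>2)"
    using s K by (simp add: slope_0_eq power2_eq_square)
  also have "\<dots> \<le> \<bar>cos t\<bar> / (sin t * (ln 8 - ln (sin t))\<^sup>2)"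
  proof (rule divide_right_mono)
    have "\<bar>cos t\<bar> * \<bar>cos t\<bar> \<le> \<bar>cos t\<bar>"
      by (intro mult_left_le) auto
    then show "(cos t)\<^sup>2 \<le> \<bar>cos t\<bar>"
      by (simp add: power2_eq_square abs_mult[symmetric])
  qed (use s in simp)
  also have "\<dots> = \<bar>slope_majorant t\<bar>"
    using s by (simp add: slope_majorant_def abs_divide abs_mult)
  finally show ?thesis .
qed

lemma set_integrable_slope_0_sq: "set_integrable lborel {0..pi} (\<lambda>t. (slope 0 t)\<^sup>2 * sin t)"
proof -
  define w where
    "w t = indicator {0<..<pi/2} t * slope_majorant t + indicator {pi/2<..<pi} t * - slope_majorant t"
    for t :: real
  have "integrable lborel w"
    using set_integrable_slope_majorant set_integrable_minus_slope_majorant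
    unfolding set_integrable_def w_def by (intro Bochner_Integration.integrable_add) auto
  then show ?thesis
    unfolding set_integrable_def
  proof (rule Bochner_Integration.integrable_bound)
    show "(\<lambda>t. indicator {0..pi} t *\<^sub>R ((slope 0 t)\<^sup>2 * sin t)) \<in> borel_measurable lborel"
      unfolding slope_def profile'_def ell_def by measurable
    have w_nonneg: "0 \<le> w t" for t
      using slope_majorant_nonneg[of t] slope_majorant_nonpos[of t] by (simp add: w_def indicator_def)
    have le_w: "indicator {0..pi} t * ((slope 0 t)\<^sup>2 * sin t) \<le> w t" for t
    proof (cases "t \<in> {0<..<pi} \<and> t \<noteq> pi/2")
      case True
      then have le: "(slope 0 t)\<^sup>2 * sin t \<le> \<bar>slope_majorant t\<bar>"
        by (intro slope_0_sq_le sin_gt_zero) auto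
      consider "t \<in> {0<..<pi/2}" | "t \<in> {pi/2<..<pi}"
        using True by force
      then show ?thesis
        using le slope_majorant_nonneg[of t] slope_majorant_nonpos[of t]
        by cases (auto simp: w_def indicator_def)
    next
      case False
      then consider "cos t = 0" | "t \<notin> {0<..<pi}"
        by fastforce
      then have "indicator {0..pi} t * ((slope 0 t)\<^sup>2 * sin t) = 0"
        by cases (simp add: slope_def profile'_def, auto simp: indicator_def slope_def)
      with w_nonneg[of t] show ?thesis
        by linarith
    qed
    show "AE t in lborel. norm (indicator {0..pi} t *\<^sub>R ((slope 0 t)\<^sup>2 * sin t)) \<le> norm (w t)"
    proof (intro AE_I2)
      fix t :: real
      have "0 \<le> indicator {0..pi} t * ((slope 0 t)\<^sup>2 * sin t)"
        by (simp add: indicator_def sin_ge_zero)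
      with le_w[of t] w_nonneg[of t]
      show "norm (indicator {0..pi} t *\<^sub>R ((slope 0 t)\<^sup>2 * sin t)) \<le> norm (w t)"
        by simp
    qed
  qed
qed

lemma
  fixes q :: "nat \<Rightarrow> real \<Rightarrow> real" and w :: "real \<Rightarrow> real"
  assumes S: "S \<in> sets borel" and q: "\<And>n. q n \<in> borel_measurable borel"
    and w: "set_integrable lborel S w"
    and bound: "\<And>n t. t \<in> S \<Longrightarrow> \<bar>q n t\<bar> \<le> w t"
    and lim: "\<And>t. t \<in> S \<Longrightarrow> (\<lambda>n. q n t) \<longlonglongrightarrow> 0"
  shows set_integrable_dominated: "set_integrable lborel S (q n)"
    and set_integral_tendsto_0_dominated: "(\<lambda>n. LINT t:S|lborel. q n t) \<longlonglongrightarrow> 0"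
proof -
  have meas: "(\<lambda>t. indicator S t *\<^sub>R q n t) \<in> borel_measurable lborel" for n
    using S q by measurable
  have W: "integrable lborel (\<lambda>t. indicator S t *\<^sub>R w t)"
    using w by (simp add: set_integrable_def)
  have lim': "AE t in lborel. (\<lambda>n. indicator S t *\<^sub>R q n t) \<longlonglongrightarrow> 0"
    using lim by (intro AE_I2) (auto simp: indicator_def)
  have bound': "AE t in lborel. norm (indicator S t *\<^sub>R q n t) \<le> indicator S t *\<^sub>R w t" for n
    using bound by (intro AE_I2) (auto simp: indicator_def)
  show "set_integrable lborel S (q n)"
    unfolding set_integrable_def
    by (rule integrable_dominated_convergence2[OF borel_measurable_const meas W lim' bound'])
  show "(\<lambda>n. LINT t:S|lborel. q n t) \<longlonglongrightarrow> 0"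
    unfolding set_lebesgue_integral_def
    using integral_dominated_convergence[OF borel_measurable_const meas W lim' bound'] by simp
qed

lemma
  fixes d :: "nat \<Rightarrow> real"
  assumes d: "d \<longlonglongrightarrow> 0" "\<And>n. 0 \<le> d n" "\<And>n. d n \<le> 1"
  shows set_integrable_profile_error:
      "set_integrable lborel {0..pi} (\<lambda>t. (profile (d n) (cos t) - f_profile (cos t))\<^sup>2 * sin t)"
    and profile_error_tendsto_0:
      "(\<lambda>n. LINT t:{0..pi}|lborel. (profile (d n) (cos t) - f_profile (cos t))\<^sup>2 * sin t) \<longlonglongrightarrow> 0"
proof -
  have err_le: "\<bar>(profile (d n) (cos t) - f_profile (cos t))\<^sup>2 * sin t\<bar> \<le> 32" if "t \<in> {0..pi}" for n t
  proof (cases "sin t = 0")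
    case False
    with that have s: "0 < sin t"
      using sin_ge_zero[of t] by auto
    then have "f_profile (cos t) = profile 0 (cos t)"
      by (simp add: f_profile_eq_profile abs_cos_less_1)
    then have "\<bar>profile (d n) (cos t) - f_profile (cos t)\<bar> \<le> \<bar>f_profile (cos t)\<bar>"
      using profile_cos_bounds[OF False d(2)[of n] d(3)[of n]] by linarith
    then have "(profile (d n) (cos t) - f_profile (cos t))\<^sup>2 \<le> (f_profile (cos t))\<^sup>2"
      by (simp add: abs_le_square_iff)
    then have "(profile (d n) (cos t) - f_profile (cos t))\<^sup>2 * sin t \<le> (f_profile (cos t))\<^sup>2 * sin t"
      using s by (simp add: mult_right_mono)
    then have "(profile (d n) (cos t) - f_profile (cos t))\<^sup>2 * sin t \<le> 32"
      using f_profile_cos_sq_le[of t] s by linarith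
    then show ?thesis
      using s by simp
  qed simp
  have err_lim: "(\<lambda>n. (profile (d n) (cos t) - f_profile (cos t))\<^sup>2 * sin t) \<longlonglongrightarrow> 0" for t
  proof (cases "sin t = 0")
    case False
    then have "(\<lambda>n. (profile (d n) (cos t) - f_profile (cos t))\<^sup>2 * sin t)
        \<longlonglongrightarrow> (profile 0 (cos t) - f_profile (cos t))\<^sup>2 * sin t"
      by (intro tendsto_intros profile_cos_tendsto d(1))
    moreover have "f_profile (cos t) = profile 0 (cos t)"
      using False by (simp add: f_profile_eq_profile abs_cos_less_1)
    ultimately show ?thesis
      by simp
  qed simp
  have meas: "(\<lambda>t. (profile (d n) (cos t) - f_profile (cos t))\<^sup>2 * sin t) \<in> borel_measurable borel" for n
    unfolding profile_def f_profile_def ell_def by measurable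
  have "set_integrable lborel {0..pi} (\<lambda>t::real. 32::real)"
    by (simp add: set_integrable_def integrable_indicator_iff)
  from set_integrable_dominated[OF _ meas this err_le err_lim]
    set_integral_tendsto_0_dominated[OF _ meas this err_le err_lim]
  show "set_integrable lborel {0..pi} (\<lambda>t. (profile (d n) (cos t) - f_profile (cos t))\<^sup>2 * sin t)"
    "(\<lambda>n. LINT t:{0..pi}|lborel. (profile (d n) (cos t) - f_profile (cos t))\<^sup>2 * sin t) \<longlonglongrightarrow> 0"
    by auto
qed

lemma
  fixes d :: "nat \<Rightarrow> real"
  assumes d: "d \<longlonglongrightarrow> 0" "\<And>n. 0 \<le> d n" "\<And>n. d n \<le> 1"
  shows set_integrable_slope_error:
      "set_integrable lborel {0..pi} (\<lambda>t. (slope (d n) t - slope 0 t)\<^sup>2 * sin t)"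
    and slope_error_tendsto_0:
      "(\<lambda>n. LINT t:{0..pi}|lborel. (slope (d n) t - slope 0 t)\<^sup>2 * sin t) \<longlonglongrightarrow> 0"
proof -
  have err_le: "\<bar>(slope (d n) t - slope 0 t)\<^sup>2 * sin t\<bar> \<le> 4 * ((slope 0 t)\<^sup>2 * sin t)"
    if "t \<in> {0..pi}" for n t
  proof -
    have s: "0 \<le> sin t"
      using that sin_ge_zero by auto
    have "\<bar>slope (d n) t - slope 0 t\<bar> \<le> \<bar>2 * slope 0 t\<bar>"
      using abs_slope_le[OF d(2)[of n] d(3)[of n], of t] by linarith
    then have "(slope (d n) t - slope 0 t)\<^sup>2 \<le> 4 * (slope 0 t)\<^sup>2"
      by (simp add: abs_le_square_iff power_mult_distrib)
    then have "(slope (d n) t - slope 0 t)\<^sup>2 * sin t \<le> 4 * (slope 0 t)\<^sup>2 * sin t"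
      using s by (rule mult_right_mono)
    then show ?thesis
      using s by (simp add: mult.assoc)
  qed
  have err_lim: "(\<lambda>n. (slope (d n) t - slope 0 t)\<^sup>2 * sin t) \<longlonglongrightarrow> 0" for t
  proof -
    have "(\<lambda>n. (slope (d n) t - slope 0 t)\<^sup>2 * sin t) \<longlonglongrightarrow> (slope 0 t - slope 0 t)\<^sup>2 * sin t"
      by (intro tendsto_intros slope_tendsto d(1))
    then show ?thesis
      by simp
  qed
  have meas: "(\<lambda>t. (slope (d n) t - slope 0 t)\<^sup>2 * sin t) \<in> borel_measurable borel" for n
    unfolding slope_def profile'_def ell_def by measurable
  have "set_integrable lborel {0..pi} (\<lambda>t. 4 * ((slope 0 t)\<^sup>2 * sin t))"
    using set_integrable_slope_0_sq by (rule set_integrable_mult_right)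
  from set_integrable_dominated[OF _ meas this err_le err_lim]
    set_integral_tendsto_0_dominated[OF _ meas this err_le err_lim]
  show "set_integrable lborel {0..pi} (\<lambda>t. (slope (d n) t - slope 0 t)\<^sup>2 * sin t)"
    "(\<lambda>n. LINT t:{0..pi}|lborel. (slope (d n) t - slope 0 t)\<^sup>2 * sin t) \<longlonglongrightarrow> 0"
    by auto
qed

section \<open>Zonal functions on the sphere\<close>

lemma sph_nth:
  "sph p $ 1 = cos (fst p) * sin (snd p)" "sph p $ 2 = sin (fst p) * sin (snd p)"
  "sph p $ 3 = cos (snd p)"
  by (simp_all add: sph_def)

lemma norm_sph: "norm (sph p) = 1"
proof -
  have "sph p \<bullet> sph p = (cos (fst p) * sin (snd p))\<^sup>2 + (sin (fst p) * sin (snd p))\<^sup>2 + (cos (snd p))\<^sup>2"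
    by (simp add: inner_vec_def sum_3 sph_nth power2_eq_square)
  also have "\<dots> = ((cos (fst p))\<^sup>2 + (sin (fst p))\<^sup>2) * (sin (snd p))\<^sup>2 + (cos (snd p))\<^sup>2"
    by (simp only: distrib_right power_mult_distrib)
  also have "\<dots> = 1"
    by (simp only: sin_cos_squared_add2 mult_1 sin_cos_squared_add)
  finally show ?thesis
    by (simp add: norm_eq_sqrt_inner)
qed

lemma continuous_on_sph_nth: "continuous_on A (\<lambda>p. sph p $ i)"
proof -
  have "i = 1 \<or> i = 2 \<or> i = 3"
    using exhaust_3 by blast
  then show ?thesis
    by (elim disjE) (simp_all add: sph_nth; intro continuous_intros)+
qed

definition zonal :: "(real \<Rightarrow> real) \<Rightarrow> real^3 \<Rightarrow> complex" where
  "zonal k x = complex_of_real (k (x $ 3))"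

lemma zonal_sph: "zonal k (sph p) = complex_of_real (k (cos (snd p)))"
  by (simp add: zonal_def sph_nth)

lemma zonal_diff: "(\<lambda>x. zonal a x - zonal b x) = zonal (\<lambda>s. a s - b s)"
  by (simp add: zonal_def fun_eq_iff)

lemma has_derivative_nth_3_div_norm:
  fixes \<xi> :: "real^3"
  assumes "norm \<xi> = 1"
  shows "((\<lambda>x. x $ 3 / norm x) has_derivative (\<lambda>v. v $ 3 - \<xi> $ 3 * (v \<bullet> \<xi>))) (at \<xi>)"
proof -
  have "((\<lambda>x::real^3. x $ 3) has_derivative (\<lambda>v. v $ 3)) (at \<xi>)"
    by (rule bounded_linear_imp_has_derivative) (rule bounded_linear_vec_nth)
  moreover have "(norm has_derivative (\<lambda>v. v \<bullet> sgn \<xi>)) (at \<xi>)"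
    using assms by (intro has_derivative_norm) auto
  moreover have "sgn \<xi> = \<xi>"
    using assms by (simp add: sgn_div_norm)
  ultimately have "((\<lambda>x. x $ 3 / norm x) has_derivative
     (\<lambda>v. - \<xi> $ 3 * (inverse (norm \<xi>) * (v \<bullet> \<xi>) * inverse (norm \<xi>)) + v $ 3 / norm \<xi>)) (at \<xi>)"
    using has_derivative_divide assms by fastforce
  then show ?thesis
    using assms by (simp add: algebra_simps)
qed

lemma sgrad_zonal:
  fixes \<xi> :: "real^3"
  assumes k: "(k has_real_derivative k') (at (\<xi> $ 3))" and \<xi>: "norm \<xi> = 1"
  shows "sgrad (zonal k) i \<xi> = complex_of_real (k' * ((axis i 1 :: real^3) $ 3 - \<xi> $ 3 * \<xi> $ i))"
proof -
  have "radial_ext (zonal k) = (\<lambda>x. complex_of_real (k (x $ 3 / norm x)))"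
    by (simp add: fun_eq_iff radial_ext_def zonal_def divide_inverse_commute)
  moreover have "(k has_derivative (*) k') (at (\<xi> $ 3 / norm \<xi>))"
    using k \<xi> by (simp add: has_field_derivative_def)
  from has_derivative_of_real[OF diff_chain_at[OF has_derivative_nth_3_div_norm[OF \<xi>] this]]
  have "((\<lambda>x. complex_of_real (k (x $ 3 / norm x))) has_derivative
      (\<lambda>v. complex_of_real (k' * (v $ 3 - \<xi> $ 3 * (v \<bullet> \<xi>))))) (at \<xi>)"
    by (simp add: o_def)
  ultimately have "frechet_derivative (radial_ext (zonal k)) (at \<xi>) =
      (\<lambda>v. complex_of_real (k' * (v $ 3 - \<xi> $ 3 * (v \<bullet> \<xi>))))"
    by (simp add: frechet_derivative_at[symmetric])
  then show ?thesis
    by (simp add: sgrad_def inner_commute[of "axis i 1"] inner_axis)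
qed

lemma abs_tangent_nth_le_sin:
  assumes "0 \<le> sin (snd p)"
  shows "\<bar>(axis i 1 :: real^3) $ 3 - cos (snd p) * sph p $ i\<bar> \<le> sin (snd p)"
proof -
  have horizontal: "\<bar>cos (snd p) * c * sin (snd p)\<bar> \<le> sin (snd p)" if "\<bar>c\<bar> \<le> 1" for c
  proof -
    have "\<bar>cos (snd p) * c\<bar> \<le> 1"
      using that by (simp add: abs_mult mult_le_one)
    then show ?thesis
      using assms mult_right_mono[of _ 1 "sin (snd p)"] by (simp add: abs_mult)
  qed
  have "sin (snd p) * sin (snd p) \<le> sin (snd p)"
    using assms by (intro mult_left_le) auto
  then have vertical: "\<bar>1 - cos (snd p) * cos (snd p)\<bar> \<le> sin (snd p)"
    using sin_squared_eq[of "snd p"] zero_le_square[of "sin (snd p)"] assms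
    by (simp add: power2_eq_square abs_le_iff)
  have "i = 1 \<or> i = 2 \<or> i = 3"
    using exhaust_3 by blast
  then show ?thesis
    using horizontal[of "cos (fst p)"] horizontal[of "sin (fst p)"] vertical
    by (elim disjE) (simp_all add: axis_def sph_nth mult.assoc)
qed

lemma C1_sphere_zonal:
  fixes k k' :: "real \<Rightarrow> real"
  assumes r: "1 < r" and k: "\<And>s. \<bar>s\<bar> < r \<Longrightarrow> (k has_real_derivative k' s) (at s)"
    and k': "continuous_on {-r<..<r} k'"
  shows "C1_sphere (zonal k)"
  unfolding C1_sphere_def
proof (intro exI conjI ballI allI)
  let ?U = "{x::real^3. \<bar>x $ 3\<bar> < r}"
  show "open ?U"
    by (rule open_Collect_less) (intro continuous_intros)+
  show "sphere 0 1 \<subseteq> ?U"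
  proof
    fix x :: "real^3" assume "x \<in> sphere 0 1"
    then have "\<bar>x $ 3\<bar> \<le> 1"
      using component_le_norm_cart[of x 3] by simp
    with r show "x \<in> ?U"
      by simp
  qed
  fix x :: "real^3" assume "x \<in> ?U"
  then have "(k has_derivative (*) (k' (x $ 3))) (at (x $ 3))"
    using k by (simp add: has_field_derivative_def)
  moreover have "((\<lambda>x::real^3. x $ 3) has_derivative (\<lambda>v. v $ 3)) (at x)"
    by (rule bounded_linear_imp_has_derivative) (rule bounded_linear_vec_nth)
  ultimately have "((\<lambda>x. k (x $ 3)) has_derivative (\<lambda>v. k' (x $ 3) * v $ 3)) (at x)"
    using diff_chain_at by (fastforce simp: o_def)
  from has_derivative_of_real[OF this]
  show "(zonal k has_derivative (\<lambda>v. complex_of_real (k' (x $ 3) * v $ 3))) (at x)"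
    unfolding zonal_def .
next
  fix v :: "real^3"
  have "continuous_on {x::real^3. \<bar>x $ 3\<bar> < r} (\<lambda>x. k' (x $ 3))"
    by (rule continuous_on_compose2[OF k']) (auto intro: continuous_intros)
  then show "continuous_on {x::real^3. \<bar>x $ 3\<bar> < r} (\<lambda>x. complex_of_real (k' (x $ 3) * v $ 3))"
    by (intro continuous_intros)
qed simp

lemma sphere_L2_continuous:
  assumes "continuous_on ({-pi..pi} \<times> {0..pi}) (\<lambda>p. g (sph p))"
  shows "sphere_L2 g"
  unfolding sphere_L2_def set_integrable_def
  by (rule borel_integrable_compact) (auto intro!: continuous_intros assms compact_Times)

lemma C1_fin_zonal:
  fixes k k' :: "real \<Rightarrow> real"
  assumes r: "1 < r" and k: "\<And>s. \<bar>s\<bar> < r \<Longrightarrow> (k has_real_derivative k' s) (at s)"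
    and k': "continuous_on {-r<..<r} k'"
  shows "C1_fin (zonal k)"
  unfolding C1_fin_def
proof (intro conjI allI)
  show "C1_sphere (zonal k)"
    using C1_sphere_zonal[OF assms] .
  have cos_in: "cos (snd p) \<in> {-r<..<r}" for p
  proof -
    have "-1 \<le> cos (snd p)" "cos (snd p) \<le> 1"
      by simp_all
    with r show ?thesis
      unfolding greaterThanLessThan_iff by (intro conjI; linarith)
  qed
  have "continuous_on {-r<..<r} k"
  proof (intro continuous_at_imp_continuous_on ballI)
    fix s assume "s \<in> {-r<..<r}"
    then show "isCont k s"
      using k[of s] DERIV_isCont by force
  qed
  then have "continuous_on A (\<lambda>p::real \<times> real. k (cos (snd p)))" for A
    by (rule continuous_on_compose2) (use cos_in in \<open>auto intro!: continuous_intros\<close>)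
  then show "sphere_L2 (zonal k)"
    by (intro sphere_L2_continuous) (simp add: zonal_sph continuous_intros)
  fix i
  have "sgrad (zonal k) i (sph p) =
      complex_of_real (k' (cos (snd p)) * ((axis i 1 :: real^3) $ 3 - cos (snd p) * sph p $ i))" for p
  proof -
    have "\<bar>sph p $ 3\<bar> < r"
      using cos_in[of p] by (simp add: sph_nth abs_less_iff)
    from sgrad_zonal[OF k[OF this] norm_sph] show ?thesis
      by (simp add: sph_nth)
  qed
  moreover have "continuous_on A (\<lambda>p::real \<times> real. k' (cos (snd p)))" for A
    by (rule continuous_on_compose2[OF k']) (use cos_in in \<open>auto intro!: continuous_intros\<close>)
  ultimately show "sphere_L2 (sgrad (zonal k) i)"
    by (intro sphere_L2_continuous) (simp add: continuous_intros continuous_on_sph_nth)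
qed

lemma sphere_L2sq_nonneg: "0 \<le> sphere_L2sq g"
  unfolding sphere_L2sq_def set_lebesgue_integral_def
  by (intro integral_nonneg_AE AE_I2) (auto simp: indicator_def sin_ge_zero)

lemma sphere_L2sq_le:
  fixes w :: "real \<Rightarrow> real"
  assumes w: "set_integrable lborel {0..pi} w"
    and le: "\<And>p. p \<in> {-pi..pi} \<times> {0..pi} \<Longrightarrow> (cmod (g (sph p)))\<^sup>2 * sin (snd p) \<le> w (snd p)"
  shows "sphere_L2sq g \<le> 2 * pi * (LINT t:{0..pi}|lborel. w t)"
proof -
  let ?C = "{-pi..pi} \<times> {0..pi}"
  have w_nonneg: "0 \<le> w (snd p)" if "p \<in> ?C" for p
  proof -
    have "0 \<le> (cmod (g (sph p)))\<^sup>2 * sin (snd p)"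
      using that sin_ge_zero by auto
    then show ?thesis
      using le[OF that] by linarith
  qed
  have I: "integrable lborel (\<lambda>t. indicator {0..pi} t * w t)"
    using w by (simp add: set_integrable_def)
  have "sphere_L2sq g = (LINT p|lborel. indicator ?C p * ((cmod (g (sph p)))\<^sup>2 * sin (snd p)))"
    by (simp add: sphere_L2sq_def set_lebesgue_integral_def)
  also have "\<dots> \<le> (LINT p|lborel. indicator {-pi..pi} (fst p) * (indicator {0..pi} (snd p) * w (snd p)))"
  proof (rule integral_mono')
    show "integrable lborel (\<lambda>p::real \<times> real. indicator {-pi..pi} (fst p) * (indicator {0..pi} (snd p) * w (snd p)))"
      by (rule integrable_lborel_product[OF _ I]) simp
    fix p :: "real \<times> real"
    show "indicator ?C p * ((cmod (g (sph p)))\<^sup>2 * sin (snd p))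
        \<le> indicator {-pi..pi} (fst p) * (indicator {0..pi} (snd p) * w (snd p))"
      "0 \<le> indicator {-pi..pi} (fst p) * (indicator {0..pi} (snd p) * w (snd p))"
      using le[of p] w_nonneg[of p]
      by (cases "p \<in> ?C"; simp add: indicator_times[symmetric] mult.assoc[symmetric])+
  qed
  also have "\<dots> = 2 * pi * (LINT t:{0..pi}|lborel. w t)"
    by (subst integral_lborel_product[OF _ I]) (simp_all add: set_lebesgue_integral_def)
  finally show ?thesis .
qed

lemma sphere_L2_zonal:
  assumes "k \<in> borel_measurable borel" "set_integrable lborel {0..pi} (\<lambda>t. (k (cos t))\<^sup>2 * sin t)"
  shows "sphere_L2 (zonal k)"
proof -
  have "integrable lborel (\<lambda>p::real \<times> real. indicator {-pi..pi} (fst p) *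
      (indicator {0..pi} (snd p) * ((k (cos (snd p)))\<^sup>2 * sin (snd p))))"
    using assms(2) by (intro integrable_lborel_product) (simp_all add: set_integrable_def)
  then show ?thesis
    by (simp add: sphere_L2_def set_integrable_def zonal_sph indicator_times mult.assoc)
qed

lemma norm_sgrad_zonal_sph_le:
  assumes "(k has_real_derivative k') (at (cos (snd p)))" "0 \<le> sin (snd p)"
  shows "(cmod (sgrad (zonal k) i (sph p)))\<^sup>2 \<le> (k' * sin (snd p))\<^sup>2"
proof -
  from sgrad_zonal[OF assms(1)[folded sph_nth(3)] norm_sph]
  have "cmod (sgrad (zonal k) i (sph p)) = \<bar>k'\<bar> * \<bar>(axis i 1 :: real^3) $ 3 - cos (snd p) * sph p $ i\<bar>"
    by (simp only: norm_of_real abs_mult sph_nth(3))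
  also have "\<dots> \<le> \<bar>k'\<bar> * sin (snd p)"
    using abs_tangent_nth_le_sin[OF assms(2)] by (intro mult_left_mono) auto
  finally have "(cmod (sgrad (zonal k) i (sph p)))\<^sup>2 \<le> (\<bar>k'\<bar> * sin (snd p))\<^sup>2"
    by (rule power_mono) simp
  then show ?thesis
    by (simp add: power_mult_distrib)
qed

lemma power2_diff_le: "((x::real) - y)\<^sup>2 \<le> 2 * (x - z)\<^sup>2 + 2 * (y - z)\<^sup>2"
proof -
  have "0 \<le> (x + y - 2 * z)\<^sup>2"
    by simp
  then show ?thesis
    by (simp add: power2_eq_square algebra_simps)
qed

lemma Cauchy_condition_if_le_add:
  fixes x :: "nat \<Rightarrow> nat \<Rightarrow> real"
  assumes "c \<longlonglongrightarrow> 0" "\<And>m n. x m n \<le> c m + c n"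
  shows "\<forall>e>0. \<exists>N. \<forall>m\<ge>N. \<forall>n\<ge>N. x m n < e"
proof (intro allI impI)
  fix e :: real assume "0 < e"
  then obtain N where "\<And>n. N \<le> n \<Longrightarrow> c n < e / 2"
    using order_tendstoD(2)[OF assms(1), of "e / 2"] by (auto simp: eventually_sequentially)
  then show "\<exists>N. \<forall>m\<ge>N. \<forall>n\<ge>N. x m n < e"
    using assms(2) by (smt (verit, best) field_sum_of_halves)
qed

lemma sphere_L2sq_zonal_diff_le:
  fixes a b h :: "real \<Rightarrow> real"
  assumes a: "set_integrable lborel {0..pi} (\<lambda>t. (a (cos t) - h (cos t))\<^sup>2 * sin t)"
    and b: "set_integrable lborel {0..pi} (\<lambda>t. (b (cos t) - h (cos t))\<^sup>2 * sin t)"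
  shows "sphere_L2sq (\<lambda>x. zonal a x - zonal b x)
    \<le> 2 * pi * (2 * (LINT t:{0..pi}|lborel. (a (cos t) - h (cos t))\<^sup>2 * sin t)
              + 2 * (LINT t:{0..pi}|lborel. (b (cos t) - h (cos t))\<^sup>2 * sin t))"
proof -
  have "sphere_L2sq (\<lambda>x. zonal a x - zonal b x) \<le> 2 * pi *
      (LINT t:{0..pi}|lborel. 2 * ((a (cos t) - h (cos t))\<^sup>2 * sin t) + 2 * ((b (cos t) - h (cos t))\<^sup>2 * sin t))"
  proof (rule sphere_L2sq_le)
    fix p :: "real \<times> real" assume "p \<in> {-pi..pi} \<times> {0..pi}"
    then have sin: "0 \<le> sin (snd p)"
      using sin_ge_zero by auto
    show "(cmod (zonal a (sph p) - zonal b (sph p)))\<^sup>2 * sin (snd p)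
        \<le> 2 * ((a (cos (snd p)) - h (cos (snd p)))\<^sup>2 * sin (snd p))
          + 2 * ((b (cos (snd p)) - h (cos (snd p)))\<^sup>2 * sin (snd p))"
      using mult_right_mono[OF power2_diff_le sin] by (simp add: zonal_sph algebra_simps flip: of_real_diff)
  qed (intro set_integral_add(1) set_integrable_mult_right a b)
  then show ?thesis
    using a b by simp
qed

lemma sphere_L2sq_sgrad_zonal_diff_le:
  fixes a b a' b' D :: "real \<Rightarrow> real"
  assumes deriv: "\<And>s. \<bar>s\<bar> \<le> 1 \<Longrightarrow> (a has_real_derivative a' s) (at s)"
      "\<And>s. \<bar>s\<bar> \<le> 1 \<Longrightarrow> (b has_real_derivative b' s) (at s)"
    and a': "set_integrable lborel {0..pi} (\<lambda>t. (a' (cos t) * sin t - D t)\<^sup>2 * sin t)"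
    and b': "set_integrable lborel {0..pi} (\<lambda>t. (b' (cos t) * sin t - D t)\<^sup>2 * sin t)"
  shows "sphere_L2sq (sgrad (\<lambda>x. zonal a x - zonal b x) i)
    \<le> 2 * pi * (2 * (LINT t:{0..pi}|lborel. (a' (cos t) * sin t - D t)\<^sup>2 * sin t)
              + 2 * (LINT t:{0..pi}|lborel. (b' (cos t) * sin t - D t)\<^sup>2 * sin t))"
proof -
  have "sphere_L2sq (sgrad (\<lambda>x. zonal a x - zonal b x) i) \<le> 2 * pi *
      (LINT t:{0..pi}|lborel. 2 * ((a' (cos t) * sin t - D t)\<^sup>2 * sin t) + 2 * ((b' (cos t) * sin t - D t)\<^sup>2 * sin t))"
  proof (rule sphere_L2sq_le)
    fix p :: "real \<times> real" assume "p \<in> {-pi..pi} \<times> {0..pi}"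
    then have sin: "0 \<le> sin (snd p)"
      using sin_ge_zero by auto
    have "((\<lambda>s. a s - b s) has_real_derivative a' (cos (snd p)) - b' (cos (snd p))) (at (cos (snd p)))"
      by (intro DERIV_diff deriv) simp_all
    from norm_sgrad_zonal_sph_le[OF this sin]
    have "(cmod (sgrad (\<lambda>x. zonal a x - zonal b x) i (sph p)))\<^sup>2 * sin (snd p)
        \<le> (a' (cos (snd p)) * sin (snd p) - b' (cos (snd p)) * sin (snd p))\<^sup>2 * sin (snd p)"
      unfolding zonal_diff using sin by (intro mult_right_mono) (simp_all add: algebra_simps)
    also have "\<dots> \<le> 2 * ((a' (cos (snd p)) * sin (snd p) - D (snd p))\<^sup>2 * sin (snd p))
          + 2 * ((b' (cos (snd p)) * sin (snd p) - D (snd p))\<^sup>2 * sin (snd p))"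
      using mult_right_mono[OF power2_diff_le sin] by (simp add: algebra_simps)
    finally show "(cmod (sgrad (\<lambda>x. zonal a x - zonal b x) i (sph p)))\<^sup>2 * sin (snd p)
        \<le> 2 * ((a' (cos (snd p)) * sin (snd p) - D (snd p))\<^sup>2 * sin (snd p))
          + 2 * ((b' (cos (snd p)) * sin (snd p) - D (snd p))\<^sup>2 * sin (snd p))" .
  qed (intro set_integral_add(1) set_integrable_mult_right a' b')
  then show ?thesis
    using a' b' by simp
qed

lemma H1_sphere_zonalI:
  fixes k k' :: "nat \<Rightarrow> real \<Rightarrow> real" and h D :: "real \<Rightarrow> real"
  assumes C1: "\<And>n. C1_fin (zonal (k n))"
    and deriv: "\<And>n s. \<bar>s\<bar> \<le> 1 \<Longrightarrow> (k n has_real_derivative k' n s) (at s)"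
    and L2: "sphere_L2 (zonal h)"
    and int0: "\<And>n. set_integrable lborel {0..pi} (\<lambda>t. (k n (cos t) - h (cos t))\<^sup>2 * sin t)"
    and lim0: "(\<lambda>n. LINT t:{0..pi}|lborel. (k n (cos t) - h (cos t))\<^sup>2 * sin t) \<longlonglongrightarrow> 0"
    and int1: "\<And>n. set_integrable lborel {0..pi} (\<lambda>t. (k' n (cos t) * sin t - D t)\<^sup>2 * sin t)"
    and lim1: "(\<lambda>n. LINT t:{0..pi}|lborel. (k' n (cos t) * sin t - D t)\<^sup>2 * sin t) \<longlonglongrightarrow> 0"
  shows "H1_sphere (zonal h)"
proof -
  define a where "a n = (LINT t:{0..pi}|lborel. (k n (cos t) - h (cos t))\<^sup>2 * sin t)" for n
  define b where "b n = (LINT t:{0..pi}|lborel. (k' n (cos t) * sin t - D t)\<^sup>2 * sin t)" for n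
  have "H1_sphere_sq (\<lambda>x. zonal (k m) x - zonal (k n) x)
      \<le> (12 * pi * b m + pi * a m) + (12 * pi * b n + pi * a n)" for m n
  proof -
    have "(\<Sum>i\<in>UNIV. sphere_L2sq (sgrad (\<lambda>x. zonal (k m) x - zonal (k n) x) i))
        \<le> of_nat (card (UNIV :: 3 set)) * (2 * pi * (2 * b m + 2 * b n))"
      unfolding b_def by (intro sum_bounded_above sphere_L2sq_sgrad_zonal_diff_le deriv int1)
    then show ?thesis
      using sphere_L2sq_zonal_diff_le[OF int0 int0, of m n]
      by (simp add: H1_sphere_sq_def a_def algebra_simps)
  qed
  moreover have "(\<lambda>n. 12 * pi * b n + pi * a n) \<longlonglongrightarrow> 0"
    using tendsto_add[OF tendsto_mult_right_zero[OF lim1] tendsto_mult_right_zero[OF lim0]]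
    by (simp add: a_def b_def mult.commute)
  ultimately have "\<forall>e>0. \<exists>N. \<forall>m\<ge>N. \<forall>n\<ge>N. H1_sphere_sq (\<lambda>x. zonal (k m) x - zonal (k n) x) < e"
    by (rule Cauchy_condition_if_le_add[rotated])
  moreover have "(\<lambda>n. sphere_L2sq (\<lambda>x. zonal (k n) x - zonal h x)) \<longlonglongrightarrow> 0"
  proof (rule tendsto_sandwich[OF _ _ tendsto_const])
    show "eventually (\<lambda>n. 0 \<le> sphere_L2sq (\<lambda>x. zonal (k n) x - zonal h x)) sequentially"
      by (simp add: sphere_L2sq_nonneg)
    show "eventually (\<lambda>n. sphere_L2sq (\<lambda>x. zonal (k n) x - zonal h x) \<le> 2 * pi * a n) sequentially"
      unfolding a_def
      by (intro always_eventually allI sphere_L2sq_le int0) (simp add: zonal_sph flip: of_real_diff)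
    show "(\<lambda>n. 2 * pi * a n) \<longlonglongrightarrow> 0"
      using tendsto_mult_right_zero[OF lim0, of "2 * pi"] by (simp add: a_def mult.commute)
  qed
  ultimately show ?thesis
    unfolding H1_sphere_def using L2 C1 by (intro conjI exI[where x = "\<lambda>n. zonal (k n)"]) auto
qed

section \<open>The DFS function is not in \<open>H\<^sup>1\<close> of the torus\<close>

lemma isCont_slope_0: "sin t \<noteq> 0 \<Longrightarrow> isCont (slope 0) t"
proof -
  assume "sin t \<noteq> 0"
  then have "0 < 1 - (cos t)\<^sup>2 + 0" "1 - (cos t)\<^sup>2 + 0 \<le> 2"
    using abs_square_le_1[of "sin t"] by (simp_all add: sin_squared_eq[symmetric])
  then have "0 < 1 - (cos t)\<^sup>2 + 0" "1 \<le> ln 8 - ln (1 - (cos t)\<^sup>2 + 0) / 2"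
    using ell_ge_1 by (auto simp: ell_def)
  then show ?thesis
    unfolding slope_def[abs_def] profile'_def ell_def by (intro continuous_intros) auto
qed

lemma continuous_on_slope_0: "(\<And>t. t \<in> S \<Longrightarrow> sin t \<noteq> 0) \<Longrightarrow> continuous_on S (slope 0)"
  by (intro continuous_at_imp_continuous_on ballI isCont_slope_0) blast

lemma sin_pos_if_small:
  fixes t :: real
  assumes "0 < t" "t \<le> 1"
  shows "0 < sin t"
  using assms pi_gt3 by (intro sin_gt_zero) auto

lemma integral_profile_deriv_bump_scaled:
  assumes e: "0 < e" "2 * e \<le> 1"
  shows "integral {e..2*e} (\<lambda>t. profile 0 (cos t) * deriv (bump_scaled e) t)
    = integral {e..2*e} (\<lambda>t. slope 0 t * bump_scaled e t)"
proof -
  have sin_pos: "0 < sin t" if "t \<in> {e..2*e}" for t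
    using that e by (intro sin_pos_if_small) auto
  have "integral {e..2*e} (\<lambda>t. profile 0 (cos t) * deriv (bump_scaled e) t)
      = integral {e..2*e} (\<lambda>t. - (- slope 0 t) * bump_scaled e t)"
  proof (rule integral_by_parts_vanishing_ends)
    show "((\<lambda>t. profile 0 (cos t)) has_real_derivative - slope 0 t) (at t)" if "t \<in> {e..2*e}" for t
      using has_real_derivative_profile_cos sin_pos that by blast
    show "(bump_scaled e has_real_derivative deriv (bump_scaled e) t) (at t)" for t
      by (rule smooth_real_has_real_derivative[OF smooth_real_bump_scaled])
    show "continuous_on {e..2*e} (\<lambda>t. - slope 0 t)"
      using sin_pos by (intro continuous_intros continuous_on_slope_0) force
    show "continuous_on {e..2*e} (bump_scaled e)"
      by (intro continuous_on_smooth_real smooth_real_bump_scaled)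
    show "bump_scaled e e = 0" "bump_scaled e (2 * e) = 0"
      using bump_scaled_eq_0[OF e(1)] by auto
  qed (use e in auto)
  then show ?thesis
    by simp
qed

lemma integral_slope_0_bump_scaled_ge:
  assumes e: "0 < e" "2 * e \<le> 1"
  shows "exp (-8) / (8 * (ln 8 - ln e)) \<le> integral {e..2*e} (\<lambda>t. slope 0 t * bump_scaled e t)"
proof -
  let ?I = "{e..2*e}"
  have "0 < sin t" if "t \<in> ?I" for t
    using that e by (intro sin_pos_if_small) auto
  then have "continuous_on ?I (\<lambda>t. slope 0 t * bump_scaled e t)"
    by (intro continuous_on_mult continuous_on_slope_0 continuous_on_smooth_real smooth_real_bump_scaled)
       force
  then have integrable: "(\<lambda>t. slope 0 t * bump_scaled e t) integrable_on {a..b}" if "{a..b} \<subseteq> ?I" for a b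
    using that by (intro integrable_continuous_interval) (rule continuous_on_subset)
  have "ln e < ln 8"
    using e by (subst ln_less_cancel_iff) auto
  then have ln_pos: "0 < ln 8 - ln e"
    by simp
  then have c_pos: "0 < 1 / (4 * e * (ln 8 - ln e))"
    using e by simp
  have slope_ge: "1 / (4 * e * (ln 8 - ln e)) \<le> slope 0 t" if "t \<in> ?I" for t
    using slope_0_ge[OF e, of t] that by simp
  let ?c = "1 / (4 * e * (ln 8 - ln e)) * exp (-8)"
  have sub: "{5*e/4..7*e/4} \<subseteq> ?I"
    using e by auto
  have "exp (-8) / (8 * (ln 8 - ln e)) = integral {5*e/4..7*e/4} (\<lambda>t. ?c)"
    using e ln_pos by (simp add: field_simps)
  also have "\<dots> \<le> integral {5*e/4..7*e/4} (\<lambda>t. slope 0 t * bump_scaled e t)"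
  proof (rule integral_le)
    fix t assume "t \<in> {5*e/4..7*e/4}"
    then have "1 / (4 * e * (ln 8 - ln e)) \<le> slope 0 t" "exp (-8) \<le> bump_scaled e t"
      using slope_ge sub exp_le_bump_scaled[OF e(1), of t] by auto
    moreover from this(1) c_pos have "0 \<le> slope 0 t"
      by linarith
    ultimately show "?c \<le> slope 0 t * bump_scaled e t"
      by (intro mult_mono) auto
  qed (use integrable[OF sub] integrable_const_ivl in simp_all)
  also have "\<dots> \<le> integral ?I (\<lambda>t. slope 0 t * bump_scaled e t)"
  proof (rule integral_subset_le[OF sub integrable[OF sub] integrable[OF order_refl]], intro ballI)
    fix t assume "t \<in> ?I"
    with slope_ge c_pos have "0 \<le> slope 0 t"
      by (meson less_le_trans less_imp_le)
    then show "0 \<le> slope 0 t * bump_scaled e t"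
      using bump_scaled_nonneg[of e t] by simp
  qed
  finally show ?thesis .
qed

lemma integral_DFS_pd2_bump:
  assumes e: "0 < e" "2 * e \<le> 1"
  shows "(LINT p|lborel. DFS (zonal f_profile) p * pd2 (tensor_fun bump (bump_scaled e)) p)
    = complex_of_real (integral {1..2} bump * integral {e..2*e} (\<lambda>t. slope 0 t * bump_scaled e t))"
proof -
  define b where "b t = f_profile (cos t) * deriv (bump_scaled e) t" for t
  have sin_pos: "0 < sin t" if "t \<in> {e..2*e}" for t
    using that e by (intro sin_pos_if_small) auto
  have "continuous_on {e..2*e} (\<lambda>t. profile 0 (cos t))"
    using sin_pos has_real_derivative_profile_cos
    by (intro continuous_at_imp_continuous_on ballI) (meson DERIV_isCont)
  moreover have "continuous_on {e..2*e} (deriv (bump_scaled e))"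
    by (intro continuous_on_smooth_real smooth_real_deriv smooth_real_bump_scaled)
  ultimately have cont: "continuous_on {e..2*e} (\<lambda>t. profile 0 (cos t) * deriv (bump_scaled e) t)"
    by (rule continuous_on_mult)
  have outside: "b t = 0" if "t \<notin> {e..2*e}" for t
    using deriv_eq_0_outside[OF bump_scaled_eq_0[OF e(1)] that] by (simp add: b_def)
  have inside: "b t = profile 0 (cos t) * deriv (bump_scaled e) t" if "t \<in> {e..2*e}" for t
    using sin_pos[OF that] by (simp add: b_def f_profile_eq_profile abs_cos_less_1)
  have b: "integrable lborel b"
      "(LINT t|lborel. b t) = integral {e..2*e} (\<lambda>t. slope 0 t * bump_scaled e t)"
    using integrable_vanishing_outside[OF cont outside inside]
      integral_vanishing_outside[OF cont outside inside] integral_profile_deriv_bump_scaled[OF e]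
    by auto
  have cont_bump: "continuous_on {1..2} bump"
    by (rule continuous_on_smooth_real[OF smooth_real_bump])
  have outside_bump: "bump t = 0" if "t \<notin> {1..2}" for t
    using bump_eq_0 that by auto
  have bump: "integrable lborel bump" "(LINT t|lborel. bump t) = integral {1..2} bump"
    using integrable_vanishing_outside[OF cont_bump outside_bump]
      integral_vanishing_outside[OF cont_bump outside_bump] by auto
  have "(LINT p|lborel. DFS (zonal f_profile) p * pd2 (tensor_fun bump (bump_scaled e)) p)
      = (LINT p|lborel. complex_of_real (bump (fst p) * b (snd p)))"
    by (simp add: pd2_tensor_fun smooth_real_bump_scaled DFS_def zonal_sph tensor_fun_def b_def mult_ac)
  also have "\<dots> = complex_of_real (LINT p|lborel. bump (fst p) * b (snd p))"
    by (rule integral_complex_of_real)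
  finally show ?thesis
    using integral_lborel_product[OF bump(1) b(1)] bump(2) b(2) by simp
qed

lemma norm_integral_DFS_pd2_bump_ge:
  assumes e: "0 < e" "2 * e \<le> 1"
  shows "exp (-16) / (16 * (ln 8 - ln e))
    \<le> cmod (LINT p|lborel. DFS (zonal f_profile) p * pd2 (tensor_fun bump (bump_scaled e)) p)"
proof -
  let ?J = "integral {e..2*e} (\<lambda>t. slope 0 t * bump_scaled e t)"
  have "ln e < ln 8"
    using e by (subst ln_less_cancel_iff) auto
  have "exp (-16) / (16 * (ln 8 - ln e)) = exp (-8) / 2 * (exp (-8) / (8 * (ln 8 - ln e)))"
    by (simp add: field_simps flip: exp_add)
  also have "\<dots> \<le> integral {1..2} bump * ?J"
    using \<open>ln e < ln 8\<close>
    by (intro mult_mono integral_bump_ge integral_slope_0_bump_scaled_ge e)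
       (use integral_bump_ge exp_gt_zero[of "-8"] in \<open>linarith | simp\<close>)+
  also have "\<dots> \<le> cmod (complex_of_real (integral {1..2} bump * ?J))"
    by (simp only: norm_of_real abs_ge_self)
  finally show ?thesis
    by (simp only: integral_DFS_pd2_bump[OF e])
qed

lemma le_half_square_add_inverse: "0 < (r::real) \<Longrightarrow> x \<le> r / 2 * x\<^sup>2 + 1 / (2 * r)"
proof -
  assume r: "0 < r"
  have "0 \<le> (r * x - 1)\<^sup>2 / (2 * r)"
    using r by simp
  also have "(r * x - 1)\<^sup>2 / (2 * r) = r / 2 * x\<^sup>2 + 1 / (2 * r) - x"
    using r by (simp add: field_simps power2_eq_square)
  finally show ?thesis
    by simp
qed

lemma norm_integral_mult_le_box:
  fixes g u :: "real \<times> real \<Rightarrow> complex"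
  assumes g: "set_integrable lborel C (\<lambda>p. (cmod (g p))\<^sup>2)"
    and u: "\<And>p. cmod (u p) \<le> indicator ({a1..a2} \<times> {b1..b2}) p"
    and box: "{a1..a2} \<times> {b1..b2} \<subseteq> C" and r: "0 < r" and "a1 \<le> a2" "b1 \<le> b2"
  shows "cmod (LINT p|lborel. g p * u p)
    \<le> r / 2 * (LINT p:C|lborel. (cmod (g p))\<^sup>2) + (a2 - a1) * (b2 - b1) / (2 * r)"
proof -
  define W where "W p = r / 2 * (indicator C p * (cmod (g p))\<^sup>2)
    + 1 / (2 * r) * (indicator {a1..a2} (fst p) * indicator {b1..b2} (snd p))" for p :: "real \<times> real"
  have ind: "integrable lborel (indicator {a1..a2} :: real \<Rightarrow> real)"
    "integrable lborel (indicator {b1..b2} :: real \<Rightarrow> real)"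
    by (simp_all add: integrable_indicator_iff emeasure_lborel_Icc_eq)
  have gC: "integrable lborel (\<lambda>p. indicator C p * (cmod (g p))\<^sup>2)"
    using g by (simp add: set_integrable_def)
  have W: "integrable lborel W"
    unfolding W_def using gC integrable_lborel_product[OF ind] by auto
  have "(LINT p|lborel. W p) = r / 2 * (LINT p:C|lborel. (cmod (g p))\<^sup>2) + (a2 - a1) * (b2 - b1) / (2 * r)"
    unfolding W_def using gC integrable_lborel_product[OF ind] integral_lborel_product[OF ind] assms(5,6)
    by (simp add: set_lebesgue_integral_def)
  moreover have "norm (g p * u p) \<le> W p" for p
  proof (cases "p \<in> {a1..a2} \<times> {b1..b2}")
    case True
    then have "norm (g p * u p) \<le> norm (g p)"
      using u[of p] by (simp add: norm_mult mult_left_le)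
    also have "\<dots> \<le> r / 2 * (cmod (g p))\<^sup>2 + 1 / (2 * r)"
      by (rule le_half_square_add_inverse[OF r])
    also have "\<dots> = W p"
      using True box by (auto simp: W_def indicator_def mem_Times_iff)
    finally show ?thesis .
  next
    case False
    then have "u p = 0"
      using u[of p] by (simp add: indicator_def)
    moreover have "0 \<le> W p"
      unfolding W_def using r by simp
    ultimately show ?thesis
      by simp
  qed
  then have "cmod (LINT p|lborel. g p * u p) \<le> (LINT p|lborel. W p)"
    using integral_norm_bound[of lborel "\<lambda>p. g p * u p"] integral_mono'[OF W, of "\<lambda>p. norm (g p * u p)"]
    by (smt (verit) norm_ge_zero)
  ultimately show ?thesis
    by simp
qed

lemma norm_tensor_fun_bump_le:
  assumes "0 < e"
  shows "cmod (tensor_fun bump (bump_scaled e) p) \<le> indicator ({1..2} \<times> {e..2*e}) p"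
proof -
  have "cmod (tensor_fun bump (bump_scaled e) p) = bump (fst p) * bump_scaled e (snd p)"
    unfolding tensor_fun_def norm_of_real using bump_nonneg bump_scaled_nonneg by simp
  moreover have "bump (fst p) * bump_scaled e (snd p) = 0" if "p \<notin> {1..2} \<times> {e..2*e}"
    using that bump_eq_0[of "fst p"] bump_scaled_eq_0[OF assms, of "snd p"] by (cases p) auto
  ultimately show ?thesis
    using bump_le_1 bump_nonneg bump_scaled_le_1 bump_scaled_nonneg
    by (auto simp: indicator_def intro: mult_le_one)
qed

lemma weak_pd2_DFS_f_profile_estimate:
  assumes g: "weak_pd2 (DFS (zonal f_profile)) g"
    and gL2: "set_integrable lborel ({-pi..pi} \<times> {-pi..pi}) (\<lambda>p. (cmod (g p))\<^sup>2)"
    and e: "0 < e" "2 * e \<le> 1"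
  shows "exp (-16) \<le> 8 * (sqrt e * (ln 8 - ln e)) * ((LINT p:{-pi..pi} \<times> {-pi..pi}|lborel. (cmod (g p))\<^sup>2) + 1)"
proof -
  let ?u = "tensor_fun bump (bump_scaled e)"
  let ?A = "LINT p:{-pi..pi} \<times> {-pi..pi}|lborel. (cmod (g p))\<^sup>2"
  have "test_fun ?u"
    using bump_eq_0 bump_scaled_eq_0[OF e(1)]
    by (intro test_fun_tensor_fun[of bump "bump_scaled e" 1 2 e "2 * e"]
        smooth_real_bump smooth_real_bump_scaled) auto
  then have "cmod (LINT p|lborel. DFS (zonal f_profile) p * pd2 ?u p) = cmod (LINT p|lborel. g p * ?u p)"
    using g unfolding weak_pd2_def by simp
  moreover have "cmod (LINT p|lborel. g p * ?u p) \<le> sqrt e / 2 * ?A + (2 - 1) * (2 * e - e) / (2 * sqrt e)"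
    using e pi_gt3 norm_tensor_fun_bump_le[OF e(1)]
    by (intro norm_integral_mult_le_box[OF gL2]) auto
  moreover have "(2 - 1) * (2 * e - e) / (2 * sqrt e) = sqrt e / 2"
    using e by (simp add: field_simps flip: real_sqrt_mult)
  ultimately have "exp (-16) / (16 * (ln 8 - ln e)) \<le> sqrt e / 2 * (?A + 1)"
    using norm_integral_DFS_pd2_bump_ge[OF e] by (simp add: algebra_simps)
  moreover have "ln e < ln 8"
    using e by (subst ln_less_cancel_iff) auto
  ultimately have "exp (-16) \<le> sqrt e / 2 * (?A + 1) * (16 * (ln 8 - ln e))"
    by (simp add: pos_divide_le_eq)
  also have "\<dots> = 8 * (sqrt e * (ln 8 - ln e)) * (?A + 1)"
    by (simp add: field_simps)
  finally show ?thesis .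
qed

lemma not_H1_torus_DFS_f_profile: "\<not> H1_torus (DFS (zonal f_profile))"
proof
  assume "H1_torus (DFS (zonal f_profile))"
  then obtain g where g: "weak_pd2 (DFS (zonal f_profile)) g" and "torus_L2 g"
    unfolding H1_torus_def by blast
  then have gL2: "set_integrable lborel ({-pi..pi} \<times> {-pi..pi}) (\<lambda>p. (cmod (g p))\<^sup>2)"
    by (simp add: torus_L2_def)
  define A where "A = (LINT p:{-pi..pi} \<times> {-pi..pi}|lborel. (cmod (g p))\<^sup>2)"
  have "((\<lambda>e. 8 * (sqrt e * (ln 8 - ln e)) * (A + 1)) \<longlongrightarrow> 8 * 0 * (A + 1)) (at_right 0)"
    by (intro tendsto_intros) real_asymp
  then have "eventually (\<lambda>e. 8 * (sqrt e * (ln 8 - ln e)) * (A + 1) < exp (-16)) (at_right 0)"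
    by (intro order_tendstoD) auto
  moreover have "eventually (\<lambda>e::real. 0 < e \<and> 2 * e \<le> 1) (at_right 0)"
    unfolding eventually_at_right_field by (intro exI[of _ "1/2"]) auto
  ultimately have "eventually (\<lambda>e::real. False) (at_right 0)"
    by eventually_elim (use weak_pd2_DFS_f_profile_estimate[OF g gL2] in \<open>fastforce simp: A_def\<close>)
  then show False
    by simp
qed

section \<open>The function is in \<open>H\<^sup>1\<close> of the sphere\<close>

lemma sphere_L2_f_profile: "sphere_L2 (zonal f_profile)"
proof (rule sphere_L2_zonal)
  show meas: "f_profile \<in> borel_measurable borel"
    unfolding f_profile_def by measurable
  have "set_integrable lborel {0..pi} (\<lambda>t::real. 32::real)"
    by (simp add: set_integrable_def integrable_indicator_iff)
  then show "set_integrable lborel {0..pi} (\<lambda>t. (f_profile (cos t))\<^sup>2 * sin t)"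
  proof (rule set_integrable_bound)
    show "set_borel_measurable lborel {0..pi} (\<lambda>t. (f_profile (cos t))\<^sup>2 * sin t)"
      unfolding set_borel_measurable_def using meas by measurable
    show "AE t in lborel. t \<in> {0..pi} \<longrightarrow> norm ((f_profile (cos t))\<^sup>2 * sin t) \<le> norm (32::real)"
      using f_profile_cos_sq_le sin_ge_zero by (intro AE_I2) auto
  qed
qed

lemma C1_fin_zonal_profile:
  assumes d: "0 < d" "d \<le> 1"
  shows "C1_fin (zonal (profile d))"
proof (rule C1_fin_zonal)
  let ?r = "sqrt (1 + d)"
  show "1 < ?r"
    using d by simp
  have domain: "0 < 1 - s\<^sup>2 + d" "1 - s\<^sup>2 + d \<le> 2" if "\<bar>s\<bar> < ?r" for s
  proof -
    have "s\<^sup>2 < 1 + d"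
      using that by (metis real_sqrt_abs real_sqrt_less_iff)
    then show "0 < 1 - s\<^sup>2 + d" "1 - s\<^sup>2 + d \<le> 2"
      using d zero_le_power2[of s] by linarith+
  qed
  show "(profile d has_real_derivative profile' d s) (at s)" if "\<bar>s\<bar> < ?r" for s
    using domain[OF that] by (rule has_real_derivative_profile)
  show "continuous_on {-?r<..<?r} (profile' d)"
  proof (intro continuous_at_imp_continuous_on ballI)
    fix s assume "s \<in> {-?r<..<?r}"
    then have "0 < 1 - s\<^sup>2 + d" "1 \<le> ell (1 - s\<^sup>2 + d)"
      using domain[of s] ell_ge_1 by (auto simp: abs_less_iff)
    then show "isCont (profile' d) s"
      unfolding profile'_def[abs_def] ell_def by (intro continuous_intros) auto
  qed
qed

lemma H1_sphere_f_profile: "H1_sphere (zonal f_profile)"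
proof -
  define d where "d n = 1 / real (Suc n)" for n
  have d: "d \<longlonglongrightarrow> 0" "0 < d n" "d n \<le> 1" for n
    unfolding d_def by real_asymp (simp_all add: field_simps)
  then have d_nonneg: "0 \<le> d n" for n
    by (simp add: less_imp_le)
  show ?thesis
  proof (rule H1_sphere_zonalI[where k' = "\<lambda>n. profile' (d n)" and D = "slope 0"])
    show "C1_fin (zonal (profile (d n)))" for n
      using d(2,3)[of n] by (rule C1_fin_zonal_profile)
    show "(profile (d n) has_real_derivative profile' (d n) s) (at s)" if "\<bar>s\<bar> \<le> 1" for n s
      using that d(2,3)[of n] abs_square_le_1[of s] zero_le_power2[of s]
      by (intro has_real_derivative_profile) linarith+
    show "set_integrable lborel {0..pi} (\<lambda>t. (profile (d n) (cos t) - f_profile (cos t))\<^sup>2 * sin t)" for n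
      by (rule set_integrable_profile_error[OF d(1) d_nonneg d(3)])
    show "(\<lambda>n. LINT t:{0..pi}|lborel. (profile (d n) (cos t) - f_profile (cos t))\<^sup>2 * sin t) \<longlonglongrightarrow> 0"
      by (rule profile_error_tendsto_0[OF d(1) d_nonneg d(3)])
    show "set_integrable lborel {0..pi} (\<lambda>t. (profile' (d n) (cos t) * sin t - slope 0 t)\<^sup>2 * sin t)" for n
      using set_integrable_slope_error[OF d(1) d_nonneg d(3)] by (simp add: slope_def)
    show "(\<lambda>n. LINT t:{0..pi}|lborel. (profile' (d n) (cos t) * sin t - slope 0 t)\<^sup>2 * sin t) \<longlonglongrightarrow> 0"
      using slope_error_tendsto_0[OF d(1) d_nonneg d(3)] by (simp add: slope_def)
  qed (rule sphere_L2_f_profile)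
qed

theorem theorem6p3:
  fixes f :: "real^3 \<Rightarrow> complex"
  assumes "\<And>\<xi>. f \<xi> = (if \<bar>\<xi> $ 3\<bar> \<noteq> 1
                      then complex_of_real (ln (ln (8 / sqrt (1 - (\<xi> $ 3)\<^sup>2)))) else 0)"
  shows "H1_sphere f \<and> \<not> H1_torus (DFS f)"
proof -
  have "f = zonal f_profile"
    using assms by (simp add: fun_eq_iff zonal_def f_profile_def)
  then show ?thesis
    using H1_sphere_f_profile not_H1_torus_DFS_f_profile by simp
qed

end
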